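(* Let $B$ be a fractional Brownian motion of Hurst index $H\in(0,1)$ with jointly continuous local time $(L^x_t)$. For $x\in\mathbb{R}$ let $Z^x_0=L^x_1-L^x_{1/2}$, and for $a>0$ let $\widetilde{Z}^a_0=\inf_{x\in[-a,a]}Z^x_0$. There exists $\epsilon_0>0$ such that for every $\epsilon\in(0,\epsilon_0)$ there is a real number $a>0$ with $$0<\mathbb{P}(Z^0_0>4\epsilon)\le 2\,\mathbb{P}(\widetilde{Z}^a_0>0).$$
   Context: Fractional Brownian motion of index $H$: centered Gaussian process with $\mathbb{E}(B_sB_t)=\frac12(|s|^{2H}+|t|^{2H}-|s-t|^{2H})$. Its local time $L^x_t$ is the density in $x$ of the occupation measure $\mu_t(A)=\mathrm{Leb}\{s\in[0,t]:B_s\in A\}$. *)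

theory Defs
  imports "HOL-Probability.Probability"
begin

definition fbm_cov :: "real \<Rightarrow> real \<Rightarrow> real \<Rightarrow> real" where
  "fbm_cov H s t = (\<bar>s\<bar> powr (2*H) + \<bar>t\<bar> powr (2*H) - \<bar>s - t\<bar> powr (2*H)) / 2"

text \<open>Centered Gaussian process with covariance R: every finite linear combination
  of the coordinates is centered normal with the variance prescribed by R
  (degenerate normal = almost surely 0 when the variance vanishes).\<close>
definition centered_gaussian_process ::
  "'a measure \<Rightarrow> (real \<Rightarrow> 'a \<Rightarrow> real) \<Rightarrow> (real \<Rightarrow> real \<Rightarrow> real) \<Rightarrow> bool" where
  "centered_gaussian_process M X R \<longleftrightarrow> prob_space M \<and>
     (\<forall>t. X t \<in> borel_measurable M) \<and>
     (\<forall>(ts :: real list) (cs :: real list). length cs = length ts \<longrightarrow>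
        (let Y = (\<lambda>\<omega>. \<Sum>i<length ts. cs!i * X (ts!i) \<omega>);
             v = (\<Sum>i<length ts. \<Sum>j<length ts. cs!i * cs!j * R (ts!i) (ts!j))
         in (if v > 0 then distributed M lborel Y (normal_density 0 (sqrt v))
             else (AE \<omega> in M. Y \<omega> = 0))))"

definition fbm :: "'a measure \<Rightarrow> real \<Rightarrow> (real \<Rightarrow> 'a \<Rightarrow> real) \<Rightarrow> bool" where
  "fbm M H B \<longleftrightarrow> centered_gaussian_process M B (fbm_cov H)"

definition jointly_continuous_local_time ::
  "'a measure \<Rightarrow> (real \<Rightarrow> 'a \<Rightarrow> real) \<Rightarrow> (real \<Rightarrow> real \<Rightarrow> 'a \<Rightarrow> real) \<Rightarrow> bool" where
  "jointly_continuous_local_time M B L \<longleftrightarrow>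
     (\<forall>x t. L x t \<in> borel_measurable M) \<and>
     (\<forall>\<omega>\<in>space M. continuous_on (UNIV \<times> {0..}) (\<lambda>(x,t). L x t \<omega>)) \<and>
     (AE \<omega> in M. \<forall>t\<ge>0. \<forall>A\<in>sets borel.
        emeasure lborel {s\<in>{0..t}. B s \<omega> \<in> A} = (\<integral>\<^sup>+ x\<in>A. ennreal (L x t \<omega>) \<partial>lborel))"

end

(*
  Write Z x = L x 1 - L x (1/2).  The heart of the matter is P(Z 0 > 0) > 0.  By the occupation
  density formula, the time in (1/2, 1] that B spends in (-d, d) equals the integral of Z x over
  (-d, d); so if Z 0 <= 0 almost surely, continuity of the local time makes this time o(d) almost
  surely.  On the other hand its first moment is at least c d (the density of B s is bounded below
  near 0), and its second moment is at most K d^2: the two-point small-ball estimate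
  P(|B s| < d, |B t| < d) <= C d^2 |t - s|^(-H) follows, via the characteristic function of
  (B s, B t), from a lower bound on the determinant of its covariance matrix, and |t - s|^(-H) is
  integrable.
  By Paley-Zygmund the time exceeds c d / 2 with probability bounded below uniformly in d, a
  contradiction.  The rest follows from the continuity of x |-> Z x and of probability along
  monotone sequences of events.
*)

theory Submission
  imports Defs
begin

section \<open>Gaussian integrals\<close>

lemma integral_cos_std_normal:
  "(\<integral>u. cos (t * u) \<partial>std_normal_distribution) = exp (- (t^2) / 2)"
proof -
  interpret real_distribution std_normal_distribution by (rule real_dist_normal_dist)
  have "Re (char std_normal_distribution t) = (\<integral>u. cos (t * u) \<partial>std_normal_distribution)"
    unfolding char_def
    by (subst integral_Re[symmetric]) (auto simp: Re_exp intro!: integrable_const_bound[where B=1])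
  then show ?thesis by (simp add: char_std_normal_distribution)
qed

lemma integral_sin_std_normal:
  "(\<integral>u. sin (t * u) \<partial>std_normal_distribution) = 0"
proof -
  interpret real_distribution std_normal_distribution by (rule real_dist_normal_dist)
  have "Im (char std_normal_distribution t) = (\<integral>u. sin (t * u) \<partial>std_normal_distribution)"
    unfolding char_def
    by (subst integral_Im[symmetric]) (auto simp: Im_exp intro!: integrable_const_bound[where B=1])
  then show ?thesis by (simp add: char_std_normal_distribution)
qed

lemma integral_cos_add_std_normal_pair:
  "(\<integral>p. cos (x * fst p + y * snd p) \<partial>(std_normal_distribution \<Otimes>\<^sub>M std_normal_distribution))
    = exp (- (x^2 + y^2) / 2)"
proof -
  let ?N = std_normal_distribution
  interpret N: real_distribution ?N by (rule real_dist_normal_dist)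
  interpret P: pair_prob_space ?N ?N by unfold_locales
  have int: "integrable (?N \<Otimes>\<^sub>M ?N) (\<lambda>p. cos (x * fst p + y * snd p))"
    by (rule P.integrable_const_bound[where B=1]) auto
  have inner: "(\<integral>v. cos (x * u + y * v) \<partial>?N) = cos (x * u) * exp (- (y^2) / 2)" for u
  proof -
    have "(\<integral>v. cos (x * u + y * v) \<partial>?N)
        = (\<integral>v. cos (x * u) * cos (y * v) - sin (x * u) * sin (y * v) \<partial>?N)"
      by (simp add: cos_add)
    also have "\<dots> = cos (x * u) * (\<integral>v. cos (y * v) \<partial>?N) - sin (x * u) * (\<integral>v. sin (y * v) \<partial>?N)"
      by (subst Bochner_Integration.integral_diff)
         (auto intro!: N.integrable_const_bound[where B=1] simp: abs_mult intro: mult_le_one)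
    finally show ?thesis by (simp add: integral_cos_std_normal integral_sin_std_normal)
  qed
  have "(\<integral>p. cos (x * fst p + y * snd p) \<partial>(?N \<Otimes>\<^sub>M ?N))
      = (\<integral>u. cos (x * u) * exp (- (y^2) / 2) \<partial>?N)"
    using P.integral_fst'[OF int] by (simp add: inner)
  also have "\<dots> = exp (- (x^2) / 2) * exp (- (y^2) / 2)"
    by (simp add: integral_cos_std_normal)
  finally show ?thesis by (simp add: exp_add[symmetric] add_divide_distrib)
qed

lemma expectation_cos_centered_normal:
  assumes "prob_space M" and Y[measurable]: "Y \<in> borel_measurable M" and "0 \<le> w"
    and "if w > 0 then distributed M lborel Y (normal_density 0 (sqrt w)) else (AE \<omega> in M. Y \<omega> = 0)"
  shows "(\<integral>\<omega>. cos (Y \<omega>) \<partial>M) = exp (- w / 2)"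
proof -
  interpret prob_space M by fact
  show ?thesis
  proof (cases "w > 0")
    case True
    let ?s = "sqrt w"
    have s: "?s > 0" using True by simp
    have "distributed M lborel Y (normal_density 0 ?s)" using assms(4) True by simp
    then have "distributed M lborel (\<lambda>\<omega>. (Y \<omega> - 0) / ?s) std_normal_density"
      by (rule normal_standard_normal_convert[OF s, THEN iffD1])
    then have std: "distr M lborel (\<lambda>\<omega>. Y \<omega> / ?s) = std_normal_distribution"
      by (simp add: distributed_distr_eq_density)
    have "(\<integral>u. cos (?s * u) \<partial>std_normal_distribution) = (\<integral>\<omega>. cos (?s * (Y \<omega> / ?s)) \<partial>M)"
      unfolding std[symmetric] by (rule integral_distr) simp_all
    then show ?thesis using s assms(3) by (simp add: integral_cos_std_normal)
  next
    case False
    then have "w = 0" "AE \<omega> in M. Y \<omega> = 0" using assms(3,4) by simp_all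
    then have "(\<integral>\<omega>. cos (Y \<omega>) \<partial>M) = (\<integral>\<omega>. 1 \<partial>M)"
      by (intro integral_cong_AE) auto
    then show ?thesis using \<open>w = 0\<close> by (simp add: prob_space)
  qed
qed

lemma nn_integral_gaussian_kernel:
  assumes "\<sigma> > 0"
  shows "(\<integral>\<^sup>+x. ennreal (exp (- ((x - \<mu>)^2) / (2 * \<sigma>^2))) \<partial>lborel) = ennreal (sqrt (2 * pi * \<sigma>^2))"
proof -
  have "exp (- ((x - \<mu>)^2) / (2 * \<sigma>^2)) = sqrt (2 * pi * \<sigma>^2) * normal_density \<mu> \<sigma> x" for x
    using assms by (simp add: normal_density_def)
  then have "(\<integral>\<^sup>+x. ennreal (exp (- ((x - \<mu>)^2) / (2 * \<sigma>^2))) \<partial>lborel)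
     = ennreal (sqrt (2 * pi * \<sigma>^2)) * (\<integral>\<^sup>+x. ennreal (normal_density \<mu> \<sigma> x) \<partial>lborel)"
    by (simp add: ennreal_mult nn_integral_cmult)
  also have "(\<integral>\<^sup>+x. ennreal (normal_density \<mu> \<sigma> x) \<partial>lborel) = 1"
    using assms nn_integral_eq_integral[of lborel "normal_density \<mu> \<sigma>"] by simp
  finally show ?thesis by simp
qed

lemma nn_integral_bivariate_gaussian_kernel:
  fixes a b c \<delta> :: real
  assumes a: "a > 0" and det: "a * b - c^2 > 0" and \<delta>: "\<delta> > 0"
  shows "(\<integral>\<^sup>+u. (\<integral>\<^sup>+v. ennreal (exp (- (a * u^2 + 2 * c * u * v + b * v^2) / (2 * \<delta>^2))) \<partial>lborel) \<partial>lborel)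
         = ennreal (2 * pi * \<delta>^2 / sqrt (a * b - c^2))"
proof -
  define d where "d = a * b - c^2"
  have b: "b > 0"
  proof (rule ccontr)
    assume "\<not> b > 0"
    then have "a * b \<le> 0"
      using a by (simp add: mult_nonneg_nonpos)
    then show False
      using det zero_le_power2[of c] by linarith
  qed
  have d: "d > 0" using det by (simp add: d_def)
  define \<sigma> where "\<sigma> = \<delta> / sqrt b"
  define \<tau> where "\<tau> = \<delta> * sqrt b / sqrt d"
  have \<sigma>: "\<sigma> > 0" and \<tau>: "\<tau> > 0" using b \<delta> d by (simp_all add: \<sigma>_def \<tau>_def)
  \<comment> \<open>completing the square in \<open>v\<close>\<close>
  have square: "exp (- (a * u^2 + 2 * c * u * v + b * v^2) / (2 * \<delta>^2))
      = exp (- ((u - 0)^2) / (2 * \<tau>^2)) * exp (- ((v - (- c * u / b))^2) / (2 * \<sigma>^2))" for u v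
  proof -
    have "- (a * u^2 + 2 * c * u * v + b * v^2) / (2 * \<delta>^2)
        = - ((u - 0)^2) / (2 * \<tau>^2) + - ((v - (- c * u / b))^2) / (2 * \<sigma>^2)"
      using b \<delta> d unfolding \<tau>_def \<sigma>_def d_def
      by (simp add: field_simps) (simp add: power2_eq_square algebra_simps)
    then show ?thesis by (simp add: exp_add[symmetric])
  qed
  have "(\<integral>\<^sup>+u. (\<integral>\<^sup>+v. ennreal (exp (- (a * u^2 + 2 * c * u * v + b * v^2) / (2 * \<delta>^2))) \<partial>lborel) \<partial>lborel)
      = (\<integral>\<^sup>+u. ennreal (exp (- ((u - 0)^2) / (2 * \<tau>^2)))
           * (\<integral>\<^sup>+v. ennreal (exp (- ((v - (- c * u / b))^2) / (2 * \<sigma>^2))) \<partial>lborel) \<partial>lborel)"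
    unfolding square by (simp add: ennreal_mult nn_integral_cmult)
  also have "\<dots> = (\<integral>\<^sup>+u. ennreal (exp (- ((u - 0)^2) / (2 * \<tau>^2))) * ennreal (sqrt (2 * pi * \<sigma>^2)) \<partial>lborel)"
    using nn_integral_gaussian_kernel[OF \<sigma>, of "- c * u / b" for u] by (intro nn_integral_cong) simp
  also have "\<dots> = ennreal (sqrt (2 * pi * \<tau>^2) * sqrt (2 * pi * \<sigma>^2))"
    using nn_integral_gaussian_kernel[OF \<tau>, of 0] by (simp add: nn_integral_multc ennreal_mult)
  also have "sqrt (2 * pi * \<tau>^2) * sqrt (2 * pi * \<sigma>^2) = (sqrt (2 * pi))^2 * (\<tau> * \<sigma>)"
    using \<sigma> \<tau> by (simp add: real_sqrt_mult power2_eq_square)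
  also have "(sqrt (2 * pi))^2 = 2 * pi"
    by simp
  also have "\<tau> * \<sigma> = \<delta>^2 / sqrt d"
    using b by (simp add: \<tau>_def \<sigma>_def power2_eq_square)
  finally show ?thesis by (simp add: d_def)
qed

lemma nn_integral_std_normal_pair_gaussian_le:
  fixes a b c \<delta> :: real
  assumes "a > 0" and "a * b - c^2 > 0" and "\<delta> > 0"
  shows "(\<integral>\<^sup>+p. ennreal (exp (- (a * (fst p)^2 + 2 * c * fst p * snd p + b * (snd p)^2) / (2 * \<delta>^2)))
            \<partial>(std_normal_distribution \<Otimes>\<^sub>M std_normal_distribution))
         \<le> ennreal (\<delta>^2 / sqrt (a * b - c^2))"
proof -
  let ?N = std_normal_distribution
  let ?e = "\<lambda>u v. exp (- (a * u^2 + 2 * c * u * v + b * v^2) / (2 * \<delta>^2))"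
  interpret N: real_distribution ?N by (rule real_dist_normal_dist)
  let ?k = "ennreal (1 / sqrt (2 * pi))"
  have density_le: "std_normal_density x \<le> 1 / sqrt (2 * pi)" for x
    by (simp add: std_normal_density_def divide_le_cancel)
  have "(\<integral>\<^sup>+p. ennreal (?e (fst p) (snd p)) \<partial>(?N \<Otimes>\<^sub>M ?N))
      = (\<integral>\<^sup>+u. (\<integral>\<^sup>+v. ennreal (?e u v) \<partial>?N) \<partial>?N)"
    using N.nn_integral_fst[of "\<lambda>p. ennreal (?e (fst p) (snd p))" ?N] by simp
  also have "\<dots> = (\<integral>\<^sup>+u. ennreal (std_normal_density u)
      * (\<integral>\<^sup>+v. ennreal (std_normal_density v) * ennreal (?e u v) \<partial>lborel) \<partial>lborel)"
    by (subst nn_integral_density) (auto simp: nn_integral_density)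
  also have "\<dots> \<le> (\<integral>\<^sup>+u. ?k * (\<integral>\<^sup>+v. ?k * ennreal (?e u v) \<partial>lborel) \<partial>lborel)"
    by (intro nn_integral_mono mult_mono) (auto simp: density_le intro!: ennreal_leI)
  also have "\<dots> = ?k * (?k * ennreal (2 * pi * \<delta>^2 / sqrt (a * b - c^2)))"
    using nn_integral_bivariate_gaussian_kernel[OF assms] by (simp add: nn_integral_cmult)
  also have "\<dots> = ennreal (\<delta>^2 / sqrt (a * b - c^2))"
    using assms(2) by (simp add: ennreal_mult[symmetric] mult.assoc[symmetric])
  finally show ?thesis .
qed

lemma (in prob_space) expectation_exp_sq_eq_integral_char:
  fixes X Y :: "'a \<Rightarrow> real"
  assumes [measurable]: "X \<in> borel_measurable M" "Y \<in> borel_measurable M"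
    and char: "\<And>u v. (\<integral>\<omega>. cos (u * X \<omega> + v * Y \<omega>) \<partial>M) = exp (- (a * u^2 + 2 * c * u * v + b * v^2) / 2)"
    and \<delta>: "\<delta> > 0"
  shows "(\<integral>\<omega>. exp (- ((X \<omega> / \<delta>)^2 + (Y \<omega> / \<delta>)^2) / 2) \<partial>M)
    = (\<integral>p. exp (- (a * (fst p)^2 + 2 * c * fst p * snd p + b * (snd p)^2) / (2 * \<delta>^2))
        \<partial>(std_normal_distribution \<Otimes>\<^sub>M std_normal_distribution))"
proof -
  let ?P = "std_normal_distribution \<Otimes>\<^sub>M std_normal_distribution"
  interpret N: real_distribution std_normal_distribution by (rule real_dist_normal_dist)
  interpret P: pair_prob_space std_normal_distribution std_normal_distribution by unfold_locales
  interpret MP: pair_prob_space M ?P by unfold_locales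
  define F where "F \<omega> p = cos (X \<omega> / \<delta> * fst p + Y \<omega> / \<delta> * snd p)" for \<omega> and p :: "real \<times> real"
  have "integrable (M \<Otimes>\<^sub>M ?P) (\<lambda>(\<omega>, p). F \<omega> p)"
    by (rule MP.integrable_const_bound[where B=1]) (auto simp: F_def split: prod.splits)
  have F_char: "(\<integral>\<omega>. F \<omega> p \<partial>M) = exp (- (a * (fst p)^2 + 2 * c * fst p * snd p + b * (snd p)^2) / (2 * \<delta>^2))" for p
    unfolding F_def using char[of "fst p / \<delta>" "snd p / \<delta>"] \<delta>
    by (simp add: field_simps power2_eq_square)
  have "(\<integral>\<omega>. exp (- ((X \<omega> / \<delta>)^2 + (Y \<omega> / \<delta>)^2) / 2) \<partial>M) = (\<integral>\<omega>. (\<integral>p. F \<omega> p \<partial>?P) \<partial>M)"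
    unfolding F_def integral_cos_add_std_normal_pair ..
  also have "\<dots> = (\<integral>p. (\<integral>\<omega>. F \<omega> p \<partial>M) \<partial>?P)"
    using \<open>integrable (M \<Otimes>\<^sub>M ?P) (\<lambda>(\<omega>, p). F \<omega> p)\<close> by (rule MP.Fubini_integral[symmetric])
  finally show ?thesis
    unfolding F_char .
qed

lemma (in prob_space) small_ball_le_of_characteristic:
  fixes X Y :: "'a \<Rightarrow> real"
  assumes [measurable]: "X \<in> borel_measurable M" "Y \<in> borel_measurable M"
    and char: "\<And>u v. (\<integral>\<omega>. cos (u * X \<omega> + v * Y \<omega>) \<partial>M) = exp (- (a * u^2 + 2 * c * u * v + b * v^2) / 2)"
    and a: "a > 0" and det: "a * b - c^2 > 0" and \<delta>: "\<delta> > 0"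
  shows "prob {\<omega>\<in>space M. \<bar>X \<omega>\<bar> < \<delta> \<and> \<bar>Y \<omega>\<bar> < \<delta>} \<le> exp 1 * \<delta>^2 / sqrt (a * b - c^2)"
proof -
  let ?S = "{\<omega>\<in>space M. \<bar>X \<omega>\<bar> < \<delta> \<and> \<bar>Y \<omega>\<bar> < \<delta>}"
  let ?e = "\<lambda>p. exp (- (a * (fst p)^2 + 2 * c * fst p * snd p + b * (snd p)^2) / (2 * \<delta>^2))"
  define g where "g \<omega> = exp (- ((X \<omega> / \<delta>)^2 + (Y \<omega> / \<delta>)^2) / 2)" for \<omega>
  have indicator_le: "indicator ?S \<omega> \<le> exp 1 * g \<omega>" for \<omega>
  proof (cases "\<omega> \<in> ?S")
    case True
    then have "(X \<omega> / \<delta>)^2 < 1" "(Y \<omega> / \<delta>)^2 < 1"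
      using \<delta> by (simp_all add: abs_square_less_1)
    then have "0 \<le> 1 + - ((X \<omega> / \<delta>)^2 + (Y \<omega> / \<delta>)^2) / 2"
      by (simp add: field_simps)
    then have "1 \<le> exp 1 * g \<omega>"
      unfolding g_def exp_add[symmetric] by simp
    then show ?thesis using True by simp
  qed (simp add: g_def)
  have "prob ?S = (\<integral>\<omega>. indicator ?S \<omega> \<partial>M)" by simp
  also have "\<dots> \<le> (\<integral>\<omega>. exp 1 * g \<omega> \<partial>M)"
    by (intro integral_mono indicator_le integrable_const_bound[where B="exp 1"])
       (auto simp: g_def split: split_indicator)
  also have "\<dots> = exp 1 * enn2real (\<integral>\<^sup>+p. ennreal (?e p) \<partial>(std_normal_distribution \<Otimes>\<^sub>M std_normal_distribution))"
    unfolding g_def using expectation_exp_sq_eq_integral_char[OF _ _ char \<delta>]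
    by (simp add: integral_eq_nn_integral)
  also have "\<dots> \<le> exp 1 * (\<delta>^2 / sqrt (a * b - c^2))"
    using nn_integral_std_normal_pair_gaussian_le[OF a det \<delta>] det by (intro mult_left_mono enn2real_leI) auto
  finally show ?thesis by simp
qed

section \<open>The covariance of fractional Brownian motion\<close>

lemma powr_diff_le_tangent:
  fixes s t H :: real
  assumes "0 < s" "s \<le> t" "0 < H" "H < 1"
  shows "t powr H - s powr H \<le> H * (t - s) * s powr (H - 1)"
proof -
  define x where "x = s powr (1 - H)"
  have x: "x > 0" using assms by (simp add: x_def)
  have "t powr H * x \<le> H * t + (1 - H) * s"
    using Youngs_inequality_0[of H "1 - H" t s] assms by (simp add: x_def)
  then have "t powr H - s / x \<le> (H * t + (1 - H) * s) / x - s / x"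
    using x by (simp add: le_divide_eq)
  also have "\<dots> = H * (t - s) * (1 / x)"
    using x by (simp add: field_simps)
  finally show ?thesis
    using assms by (simp add: x_def powr_diff)
qed

lemma powr_diff_le_mult_powr_diff:
  fixes s t H :: real
  assumes "0 < s" "s \<le> t" "t - s \<le> s" "0 < H" "H < 1"
  shows "t powr H - s powr H \<le> H * (t - s) powr H"
proof -
  have "(t - s) * s powr (H - 1) = (t - s) powr H * ((t - s) powr (1 - H) * s powr (H - 1))"
    using assms by (simp add: powr_add[symmetric] mult.assoc[symmetric])
  also have "\<dots> \<le> (t - s) powr H * (s powr (1 - H) * s powr (H - 1))"
    using assms by (intro mult_left_mono mult_right_mono powr_mono2) auto
  also have "\<dots> = (t - s) powr H"
    using assms by (simp add: powr_add[symmetric])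
  finally have "H * ((t - s) * s powr (H - 1)) \<le> H * (t - s) powr H"
    using assms(4) by (intro mult_left_mono) auto
  then show ?thesis
    using powr_diff_le_tangent[OF assms(1,2,4,5)] by (simp add: mult.assoc)
qed

lemma fbm_cov_commute: "fbm_cov H s t = fbm_cov H t s"
  unfolding fbm_cov_def by (simp add: abs_minus_commute add_ac)

lemma fbm_cov_same: "fbm_cov H s s = \<bar>s\<bar> powr (2 * H)"
  unfolding fbm_cov_def by simp

lemma fbm_cov_det_eq:
  fixes s t H :: real
  defines "p \<equiv> \<bar>s\<bar> powr H" and "q \<equiv> \<bar>t\<bar> powr H" and "y \<equiv> \<bar>t - s\<bar> powr H"
  shows "fbm_cov H s s * fbm_cov H t t - (fbm_cov H s t)^2
    = (y^2 - (q - p)^2) * ((p + q)^2 - y^2) / 4"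
proof -
  have sq: "\<bar>x\<bar> powr (2 * H) = (\<bar>x\<bar> powr H)^2" for x :: real
    by (simp add: power2_eq_square powr_add[symmetric])
  have st: "fbm_cov H s t = (p^2 + q^2 - y^2) / 2"
    unfolding fbm_cov_def p_def q_def y_def sq by (simp add: abs_minus_commute)
  have ss: "fbm_cov H s s = p^2" and tt: "fbm_cov H t t = q^2"
    unfolding fbm_cov_same p_def q_def sq by simp_all
  show ?thesis
    unfolding st ss tt by (simp add: power2_eq_square field_simps)
qed

lemma fbm_cov_det_ge_ordered:
  fixes s t H :: real
  assumes H: "0 < H" "H < 1" and st: "1/2 \<le> s" "s \<le> t" "t \<le> 1"
  shows "fbm_cov H s s * fbm_cov H t t - (fbm_cov H s t)^2 \<ge> 3 * (1 - H^2) / 16 * ((t - s) powr H)^2"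
proof -
  define p where "p = s powr H"
  define q where "q = t powr H"
  define y where "y = (t - s) powr H"
  define k where "k = (1/2 :: real) powr H"
  have y: "y \<ge> 0" by (simp add: y_def)
  have "q - p \<le> H * y" "p \<le> q"
    using powr_diff_le_mult_powr_diff[of s t H] powr_mono2[of H s t] st H
    by (simp_all add: p_def q_def y_def)
  then have "(q - p)^2 \<le> (H * y)^2"
    by (intro power_mono) auto
  then have first: "y^2 - (q - p)^2 \<ge> (1 - H^2) * y^2"
    by (simp add: algebra_simps)
  have k: "k \<ge> 1/2"
    using powr_mono'[of H 1 "1/2"] H by (simp add: k_def)
  have "k \<le> p" "k \<le> q" "y \<le> k"
    using st H by (auto simp: p_def q_def y_def k_def intro!: powr_mono2)
  then have "(2 * k)^2 \<le> (p + q)^2" "y^2 \<le> k^2" "(1/2)^2 \<le> k^2"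
    using y k by (intro power_mono; simp)+
  then have second: "(p + q)^2 - y^2 \<ge> 3/4"
    by (simp add: power_mult_distrib power2_eq_square)
  have "0 \<le> (1 - H^2) * y^2" using H by (simp add: abs_square_le_1)
  then have "(1 - H^2) * y^2 * (3/4) \<le> (y^2 - (q - p)^2) * ((p + q)^2 - y^2)"
    using first second by (intro mult_mono) auto
  then have "(1 - H^2) * y^2 * (3/4) / 4 \<le> (y^2 - (q - p)^2) * ((p + q)^2 - y^2) / 4"
    by (rule divide_right_mono) simp
  moreover have "3 * (1 - H^2) / 16 * y^2 = (1 - H^2) * y^2 * (3/4) / 4"
    by (simp add: field_simps)
  ultimately have "3 * (1 - H^2) / 16 * y^2 \<le> (y^2 - (q - p)^2) * ((p + q)^2 - y^2) / 4"
    by linarith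
  also have "\<dots> = fbm_cov H s s * fbm_cov H t t - (fbm_cov H s t)^2"
    using st by (simp add: fbm_cov_det_eq p_def q_def y_def)
  finally show ?thesis by (simp add: y_def)
qed

lemma fbm_cov_det_ge:
  fixes s t H :: real
  assumes H: "0 < H" "H < 1" and "1/2 \<le> s" "s \<le> 1" "1/2 \<le> t" "t \<le> 1"
  shows "fbm_cov H s s * fbm_cov H t t - (fbm_cov H s t)^2 \<ge> 3 * (1 - H^2) / 16 * (\<bar>t - s\<bar> powr H)^2"
proof (cases "s \<le> t")
  case True
  then show ?thesis using fbm_cov_det_ge_ordered[OF H, of s t] assms by simp
next
  case False
  then show ?thesis using fbm_cov_det_ge_ordered[OF H, of t s] assms
    by (simp add: fbm_cov_commute abs_minus_commute mult.commute)
qed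

section \<open>Small-ball probabilities of fractional Brownian motion\<close>

lemma fbm_prob_space: "fbm M H B \<Longrightarrow> prob_space M"
  unfolding fbm_def centered_gaussian_process_def by simp

lemma fbm_measurable: "fbm M H B \<Longrightarrow> B t \<in> borel_measurable M"
  unfolding fbm_def centered_gaussian_process_def by simp

lemma fbm_linear_combination:
  assumes "fbm M H B" and "length cs = length ts"
  shows "let Y = (\<lambda>\<omega>. \<Sum>i<length ts. cs!i * B (ts!i) \<omega>);
             v = (\<Sum>i<length ts. \<Sum>j<length ts. cs!i * cs!j * fbm_cov H (ts!i) (ts!j))
         in (if v > 0 then distributed M lborel Y (normal_density 0 (sqrt v))
             else (AE \<omega> in M. Y \<omega> = 0))"
  using assms unfolding fbm_def centered_gaussian_process_def by blast

lemma fbm_distributed: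
  assumes "fbm M H B" "s \<noteq> 0"
  shows "distributed M lborel (B s) (normal_density 0 (\<bar>s\<bar> powr H))"
proof -
  have "\<bar>s\<bar> powr (2 * H) = (\<bar>s\<bar> powr H)^2"
    by (simp add: power2_eq_square powr_add[symmetric])
  then have "\<bar>s\<bar> powr (2 * H) > 0" "sqrt (\<bar>s\<bar> powr (2 * H)) = \<bar>s\<bar> powr H"
    using assms(2) by simp_all
  then show ?thesis
    using fbm_linear_combination[OF assms(1), of "[1]" "[s]"] by (simp add: fbm_cov_same Let_def)
qed

lemma fbm_expectation_cos_pair:
  assumes "fbm M H B"
    and "0 \<le> u^2 * fbm_cov H s s + 2 * u * v * fbm_cov H s t + v^2 * fbm_cov H t t"
  shows "(\<integral>\<omega>. cos (u * B s \<omega> + v * B t \<omega>) \<partial>M)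
     = exp (- (u^2 * fbm_cov H s s + 2 * u * v * fbm_cov H s t + v^2 * fbm_cov H t t) / 2)"
proof -
  let ?w = "u^2 * fbm_cov H s s + 2 * u * v * fbm_cov H s t + v^2 * fbm_cov H t t"
  have w: "(\<Sum>i<length [s,t]. \<Sum>j<length [s,t]. [u,v]!i * [u,v]!j * fbm_cov H ([s,t]!i) ([s,t]!j)) = ?w"
    by (simp add: numeral_2_eq_2 fbm_cov_commute[of H t s] power2_eq_square algebra_simps)
  have Y: "(\<lambda>\<omega>. \<Sum>i<length [s,t]. [u,v]!i * B ([s,t]!i) \<omega>) = (\<lambda>\<omega>. u * B s \<omega> + v * B t \<omega>)"
    by (simp add: numeral_2_eq_2 fun_eq_iff)
  have "if ?w > 0 then distributed M lborel (\<lambda>\<omega>. u * B s \<omega> + v * B t \<omega>) (normal_density 0 (sqrt ?w))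
             else (AE \<omega> in M. u * B s \<omega> + v * B t \<omega> = 0)"
    using fbm_linear_combination[OF assms(1), of "[u,v]" "[s,t]"] unfolding Let_def w Y by simp
  moreover note [measurable] = fbm_measurable[OF assms(1)]
  ultimately show ?thesis
    by (intro expectation_cos_centered_normal[OF fbm_prob_space[OF assms(1)] _ assms(2)]) measurable
qed

lemma normal_density_ge:
  assumes "1/2 \<le> \<sigma>" "\<sigma> \<le> 1" "\<bar>x\<bar> < 1"
  shows "exp (-2) / sqrt (2 * pi) \<le> normal_density 0 \<sigma> x"
proof -
  have "(1/2)^2 \<le> \<sigma>^2" "\<sigma>^2 \<le> 1"
    using assms by (auto intro!: power_mono simp: power_le_one)
  then have v: "1/4 \<le> \<sigma>^2" "\<sigma>^2 \<le> 1"
    by (simp_all add: power2_eq_square)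
  have "1 / sqrt (2 * pi) \<le> 1 / sqrt (2 * pi * \<sigma>^2)"
    using v assms(1) by (intro divide_left_mono real_sqrt_le_mono) (auto simp: mult_le_cancel_left1)
  moreover have "x^2 / (2 * \<sigma>^2) \<le> 2"
    using assms(3) v abs_square_less_1[of x] by (simp add: divide_le_eq)
  then have "exp (-2) \<le> exp (- (x^2) / (2 * \<sigma>^2))"
    by simp
  ultimately have "1 / sqrt (2 * pi) * exp (-2) \<le> 1 / sqrt (2 * pi * \<sigma>^2) * exp (- (x^2) / (2 * \<sigma>^2))"
    using v by (intro mult_mono) auto
  then show ?thesis
    by (simp add: normal_density_def)
qed

lemma fbm_small_ball_ge:
  assumes "fbm M H B" "0 < H" "H < 1"
  shows "\<exists>c>0. \<forall>s \<delta>. 1/2 \<le> s \<and> s \<le> 1 \<and> 0 < \<delta> \<and> \<delta> \<le> 1 \<longrightarrow>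
           c * \<delta> \<le> measure M {\<omega>\<in>space M. \<bar>B s \<omega>\<bar> < \<delta>}"
proof (intro exI conjI allI impI)
  interpret prob_space M using fbm_prob_space[OF assms(1)] .
  define c0 where "c0 = exp (-2) / sqrt (2 * pi)"
  have c0: "c0 > 0" by (simp add: c0_def)
  then show "2 * c0 > 0" by simp
  fix s \<delta> :: real assume s\<delta>: "1/2 \<le> s \<and> s \<le> 1 \<and> 0 < \<delta> \<and> \<delta> \<le> 1"
  have "1/2 \<le> (1/2 :: real) powr H"
    using powr_mono'[of H 1 "1/2"] assms by simp
  also have "\<dots> \<le> s powr H"
    using s\<delta> assms by (intro powr_mono2) auto
  finally have "1/2 \<le> s powr H" .
  moreover have "s powr H \<le> 1"
    using s\<delta> assms by (intro powr_le1) auto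
  ultimately have density_ge: "c0 \<le> normal_density 0 (s powr H) x" if "\<bar>x\<bar> < 1" for x
    unfolding c0_def using that by (rule normal_density_ge)
  have "{\<omega>\<in>space M. \<bar>B s \<omega>\<bar> < \<delta>} = B s -` {-\<delta><..<\<delta>} \<inter> space M"
    by (auto simp: abs_less_iff)
  then have "emeasure M {\<omega>\<in>space M. \<bar>B s \<omega>\<bar> < \<delta>}
      = (\<integral>\<^sup>+x. ennreal (normal_density 0 (s powr H) x) * indicator {-\<delta><..<\<delta>} x \<partial>lborel)"
    using distributed_emeasure[OF fbm_distributed[OF assms(1), of s], of "{-\<delta><..<\<delta>}"] s\<delta> by simp
  also have "\<dots> \<ge> (\<integral>\<^sup>+x. ennreal c0 * indicator {-\<delta><..<\<delta>} x \<partial>lborel)"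
    using density_ge s\<delta> by (intro nn_integral_mono) (auto split: split_indicator intro!: ennreal_leI)
  moreover have "(\<integral>\<^sup>+x. ennreal c0 * indicator {-\<delta><..<\<delta>} x \<partial>lborel) = ennreal (2 * c0 * \<delta>)"
    using s\<delta> c0 by (simp add: nn_integral_cmult_indicator ennreal_mult[symmetric] mult_ac)
  ultimately have "ennreal (2 * c0 * \<delta>) \<le> ennreal (prob {\<omega>\<in>space M. \<bar>B s \<omega>\<bar> < \<delta>})"
    by (simp add: emeasure_eq_measure)
  then show "2 * c0 * \<delta> \<le> prob {\<omega>\<in>space M. \<bar>B s \<omega>\<bar> < \<delta>}"
    by simp
qed

lemma fbm_small_ball_pair_le:
  assumes "fbm M H B" "0 < H" "H < 1"
  shows "\<exists>C>0. \<forall>s t \<delta>. 1/2 \<le> s \<and> s \<le> 1 \<and> 1/2 \<le> t \<and> t \<le> 1 \<and> s \<noteq> t \<and> 0 < \<delta> \<longrightarrow>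
           measure M {\<omega>\<in>space M. \<bar>B s \<omega>\<bar> < \<delta> \<and> \<bar>B t \<omega>\<bar> < \<delta>} \<le> C * \<delta>^2 * \<bar>t - s\<bar> powr (-H)"
proof -
  interpret prob_space M using fbm_prob_space[OF assms(1)] .
  define \<kappa> where "\<kappa> = sqrt (3 * (1 - H^2) / 16)"
  have \<kappa>: "\<kappa> > 0" using assms by (simp add: \<kappa>_def abs_square_less_1)
  show ?thesis
  proof (intro exI[of _ "exp 1 / \<kappa>"] conjI allI impI)
    show "exp 1 / \<kappa> > 0" using \<kappa> by simp
  next
    fix s t \<delta> :: real assume st\<delta>: "1/2 \<le> s \<and> s \<le> 1 \<and> 1/2 \<le> t \<and> t \<le> 1 \<and> s \<noteq> t \<and> 0 < \<delta>"
    define a where "a = fbm_cov H s s"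
    define b where "b = fbm_cov H t t"
    define c where "c = fbm_cov H s t"
    define y where "y = \<bar>t - s\<bar> powr H"
    have a: "a > 0" and y: "y > 0" using st\<delta> by (simp_all add: a_def fbm_cov_same y_def)
    have "a * b - c^2 \<ge> (\<kappa> * y)^2"
      using fbm_cov_det_ge[OF assms(2,3), of s t] st\<delta> assms
      by (simp add: a_def b_def c_def y_def \<kappa>_def power_mult_distrib abs_square_le_1)
    moreover have "(\<kappa> * y)^2 > 0" using \<kappa> y by simp
    ultimately have det: "a * b - c^2 > 0" and sqrt_det: "\<kappa> * y \<le> sqrt (a * b - c^2)"
      by (linarith, intro real_le_rsqrt)
    have char: "(\<integral>\<omega>. cos (u * B s \<omega> + v * B t \<omega>) \<partial>M) = exp (- (a * u^2 + 2 * c * u * v + b * v^2) / 2)" for u v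
    proof -
      \<comment> \<open>positive definiteness of the covariance matrix\<close>
      have "a * (a * u^2 + 2 * c * u * v + b * v^2) = (a * u + c * v)^2 + (a * b - c^2) * v^2"
        by (simp add: power2_eq_square algebra_simps)
      then have "0 \<le> a * u^2 + 2 * c * u * v + b * v^2"
        using a det by (metis zero_le_mult_iff add_nonneg_nonneg zero_le_power2 less_imp_le not_less)
      then show ?thesis
        using fbm_expectation_cos_pair[OF assms(1), of u s v t]
        by (simp add: a_def b_def c_def mult_ac)
    qed
    have "prob {\<omega>\<in>space M. \<bar>B s \<omega>\<bar> < \<delta> \<and> \<bar>B t \<omega>\<bar> < \<delta>} \<le> exp 1 * \<delta>^2 / sqrt (a * b - c^2)"
      using fbm_measurable[OF assms(1)] st\<delta> by (intro small_ball_le_of_characteristic[OF _ _ char a det]) auto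
    also have "\<dots> \<le> exp 1 * \<delta>^2 / (\<kappa> * y)"
      using sqrt_det det \<kappa> y by (intro divide_left_mono) auto
    also have "\<dots> = exp 1 / \<kappa> * \<delta>^2 * \<bar>t - s\<bar> powr (-H)"
      by (simp add: y_def powr_minus divide_inverse)
    finally show "prob {\<omega>\<in>space M. \<bar>B s \<omega>\<bar> < \<delta> \<and> \<bar>B t \<omega>\<bar> < \<delta>} \<le> exp 1 / \<kappa> * \<delta>^2 * \<bar>t - s\<bar> powr (-H)" .
  qed
qed

section \<open>Occupation times\<close>

lemma LIMSEQ_floor_grid:
  "(\<lambda>n. real_of_int \<lfloor>real (Suc n) * s\<rfloor> / real (Suc n)) \<longlonglongrightarrow> s"
proof (rule tendsto_sandwich)
  show "\<forall>\<^sub>F n in sequentially. s - inverse (real (Suc n)) \<le> real_of_int \<lfloor>real (Suc n) * s\<rfloor> / real (Suc n)"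
  proof (intro always_eventually allI)
    fix n
    define N where "N = real (Suc n)"
    have N: "N > 0" by (simp add: N_def)
    have "s - inverse N = (N * s - 1) / N"
      using N by (simp add: field_simps)
    also have "\<dots> \<le> real_of_int \<lfloor>N * s\<rfloor> / N"
      using N by (intro divide_right_mono) linarith+
    finally show "s - inverse (real (Suc n)) \<le> real_of_int \<lfloor>real (Suc n) * s\<rfloor> / real (Suc n)"
      by (simp add: N_def)
  qed
  show "\<forall>\<^sub>F n in sequentially. real_of_int \<lfloor>real (Suc n) * s\<rfloor> / real (Suc n) \<le> s"
    using of_int_floor_le
    by (intro always_eventually allI) (simp add: pos_divide_le_eq mult.commute del: of_nat_Suc)
  show "(\<lambda>n. s - inverse (real (Suc n))) \<longlonglongrightarrow> s"
    using tendsto_diff[OF tendsto_const LIMSEQ_inverse_real_of_nat, of s] by simp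
qed simp

lemma measurable_continuous_paths:
  fixes X :: "real \<Rightarrow> 'a \<Rightarrow> real"
  assumes X: "\<And>t. X t \<in> borel_measurable M"
    and paths: "\<forall>\<omega>\<in>space M. continuous_on UNIV (\<lambda>s. X s \<omega>)"
  shows "(\<lambda>p. X (snd p) (fst p)) \<in> borel_measurable (M \<Otimes>\<^sub>M lborel)"
proof -
  define r where "r n s = real_of_int \<lfloor>real (Suc n) * s\<rfloor> / real (Suc n)" for n s
  show ?thesis
  proof (rule borel_measurable_LIMSEQ_real[where u="\<lambda>n p. X (r n (snd p)) (fst p)"])
    fix p :: "'a \<times> real" assume "p \<in> space (M \<Otimes>\<^sub>M lborel)"
    then have "continuous_on UNIV (\<lambda>s. X s (fst p))"
      using paths by (auto simp: space_pair_measure)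
    then show "(\<lambda>n. X (r n (snd p)) (fst p)) \<longlonglongrightarrow> X (snd p) (fst p)"
      using continuous_on_tendsto_compose[OF _ LIMSEQ_floor_grid, of UNIV] by (auto simp: r_def)
  next
    fix n
    \<comment> \<open>\<open>r n\<close> takes countably many values, so \<open>X (r n s) \<omega>\<close> is jointly measurable\<close>
    show "(\<lambda>p. X (r n (snd p)) (fst p)) \<in> borel_measurable (M \<Otimes>\<^sub>M lborel)"
      unfolding r_def
    proof (rule measurable_compose_countable[where f="\<lambda>i p. X (real_of_int i / real (Suc n)) (fst p)"])
      show "(\<lambda>p. \<lfloor>real (Suc n) * snd p\<rfloor>) \<in> measurable (M \<Otimes>\<^sub>M lborel) (count_space UNIV)"
        by measurable
    qed (use X in measurable)
  qed
qed

definition occupation_time :: "(real \<Rightarrow> 'a \<Rightarrow> real) \<Rightarrow> real set \<Rightarrow> real set \<Rightarrow> 'a \<Rightarrow> real" where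
  "occupation_time X I A \<omega> = measure lborel {s\<in>I. X s \<omega> \<in> A}"

lemma occupation_time_nonneg: "0 \<le> occupation_time X I A \<omega>"
  unfolding occupation_time_def by simp

lemma occupation_time_le:
  assumes "I \<in> sets borel" "bounded I"
  shows "occupation_time X I A \<omega> \<le> measure lborel I"
  unfolding occupation_time_def measure_def
  using assms emeasure_bounded_finite[of I] by (intro enn2real_mono emeasure_mono) auto

context prob_space
begin

context
  fixes X :: "real \<Rightarrow> 'a \<Rightarrow> real" and I A :: "real set"
  assumes X[measurable]: "\<And>t. X t \<in> borel_measurable M"
    and paths: "\<forall>\<omega>\<in>space M. continuous_on UNIV (\<lambda>s. X s \<omega>)"
    and I[measurable]: "I \<in> sets borel" and I_bounded: "bounded I"
    and A[measurable]: "A \<in> sets borel"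
begin

private definition F :: "'a \<times> real \<Rightarrow> ennreal" where
  "F p = indicator I (snd p) * indicator A (X (snd p) (fst p))"

private lemma F_measurable[measurable]: "F \<in> borel_measurable (M \<Otimes>\<^sub>M lborel)"
  using measurable_continuous_paths[OF X paths] unfolding F_def by measurable

private lemma occupation_time_eq_nn_integral:
  assumes "\<omega> \<in> space M"
  shows "ennreal (occupation_time X I A \<omega>) = (\<integral>\<^sup>+s. F (\<omega>, s) \<partial>lborel)"
proof -
  have [measurable]: "(\<lambda>s. X s \<omega>) \<in> borel_measurable borel"
    using paths assms by (intro borel_measurable_continuous_onI) auto
  have "emeasure lborel {s\<in>I. X s \<omega> \<in> A} \<le> emeasure lborel I"
    by (intro emeasure_mono) auto
  then have "ennreal (occupation_time X I A \<omega>) = emeasure lborel {s\<in>I. X s \<omega> \<in> A}"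
    using emeasure_bounded_finite[OF I_bounded] unfolding occupation_time_def by (intro emeasure_eq_ennreal_measure[symmetric]) auto
  also have "\<dots> = (\<integral>\<^sup>+s. indicator {s\<in>I. X s \<omega> \<in> A} s \<partial>lborel)"
    by simp
  also have "\<dots> = (\<integral>\<^sup>+s. F (\<omega>, s) \<partial>lborel)"
    by (intro nn_integral_cong) (simp add: F_def split: split_indicator)
  finally show ?thesis .
qed

lemma occupation_time_measurable: "occupation_time X I A \<in> borel_measurable M"
proof (rule measurable_cong[THEN iffD2])
  show "occupation_time X I A \<omega> = enn2real (\<integral>\<^sup>+s. F (\<omega>, s) \<partial>lborel)" if "\<omega> \<in> space M" for \<omega>
    using occupation_time_eq_nn_integral[OF that] by (metis enn2real_ennreal measure_nonneg occupation_time_def)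
qed measurable

lemma integrable_occupation_time: "integrable M (occupation_time X I A)"
  using occupation_time_le[OF I I_bounded] occupation_time_nonneg occupation_time_measurable
  by (intro integrable_const_bound[where B="measure lborel I"] AE_I2)
     (auto simp: abs_of_nonneg[OF occupation_time_nonneg])

lemma integrable_occupation_time_sq: "integrable M (\<lambda>\<omega>. (occupation_time X I A \<omega>)^2)"
  using occupation_time_le[OF I I_bounded] occupation_time_nonneg occupation_time_measurable
  by (intro integrable_const_bound[where B="(measure lborel I)^2"] AE_I2) (auto intro!: power_mono)

lemma expectation_occupation_time:
  "ennreal (expectation (occupation_time X I A))
    = (\<integral>\<^sup>+s. indicator I s * emeasure M {\<omega>\<in>space M. X s \<omega> \<in> A} \<partial>lborel)"
proof -
  interpret pair_sigma_finite M lborel by unfold_locales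
  have "ennreal (expectation (occupation_time X I A)) = (\<integral>\<^sup>+\<omega>. occupation_time X I A \<omega> \<partial>M)"
    using integrable_occupation_time by (subst nn_integral_eq_integral) (simp_all add: occupation_time_nonneg)
  also have "\<dots> = (\<integral>\<^sup>+\<omega>. (\<integral>\<^sup>+s. F (\<omega>, s) \<partial>lborel) \<partial>M)"
    by (intro nn_integral_cong) (simp add: occupation_time_eq_nn_integral)
  also have "\<dots> = (\<integral>\<^sup>+s. (\<integral>\<^sup>+\<omega>. F (\<omega>, s) \<partial>M) \<partial>lborel)"
    by (rule Fubini[symmetric]) measurable
  also have "\<dots> = (\<integral>\<^sup>+s. indicator I s * emeasure M {\<omega>\<in>space M. X s \<omega> \<in> A} \<partial>lborel)"
  proof (intro nn_integral_cong)
    fix s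
    have "(\<integral>\<^sup>+\<omega>. F (\<omega>, s) \<partial>M) = (\<integral>\<^sup>+\<omega>. indicator I s * indicator {\<omega>\<in>space M. X s \<omega> \<in> A} \<omega> \<partial>M)"
      by (intro nn_integral_cong) (simp add: F_def split: split_indicator)
    then show "(\<integral>\<^sup>+\<omega>. F (\<omega>, s) \<partial>M) = indicator I s * emeasure M {\<omega>\<in>space M. X s \<omega> \<in> A}"
      by (simp add: nn_integral_cmult)
  qed
  finally show ?thesis .
qed

lemma expectation_occupation_time_sq:
  "ennreal (expectation (\<lambda>\<omega>. (occupation_time X I A \<omega>)^2))
    = (\<integral>\<^sup>+s. (\<integral>\<^sup>+t. indicator I s * indicator I t
          * emeasure M {\<omega>\<in>space M. X s \<omega> \<in> A \<and> X t \<omega> \<in> A} \<partial>lborel) \<partial>lborel)"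
proof -
  interpret pair_sigma_finite M lborel by unfold_locales
  have sq: "ennreal ((occupation_time X I A \<omega>)^2) = (\<integral>\<^sup>+s. (\<integral>\<^sup>+t. F (\<omega>, s) * F (\<omega>, t) \<partial>lborel) \<partial>lborel)"
    if \<omega>: "\<omega> \<in> space M" for \<omega>
  proof -
    have "ennreal ((occupation_time X I A \<omega>)^2) = ennreal (occupation_time X I A \<omega>) * ennreal (occupation_time X I A \<omega>)"
      by (simp add: power2_eq_square ennreal_mult occupation_time_def)
    also have "\<dots> = (\<integral>\<^sup>+s. F (\<omega>, s) * (\<integral>\<^sup>+t. F (\<omega>, t) \<partial>lborel) \<partial>lborel)"
      using \<omega> by (simp add: occupation_time_eq_nn_integral nn_integral_multc)
    also have "\<dots> = (\<integral>\<^sup>+s. (\<integral>\<^sup>+t. F (\<omega>, s) * F (\<omega>, t) \<partial>lborel) \<partial>lborel)"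
      using \<omega> by (intro nn_integral_cong nn_integral_cmult[symmetric]) measurable
    finally show ?thesis .
  qed
  have "ennreal (expectation (\<lambda>\<omega>. (occupation_time X I A \<omega>)^2))
      = (\<integral>\<^sup>+\<omega>. (occupation_time X I A \<omega>)^2 \<partial>M)"
    using integrable_occupation_time_sq by (subst nn_integral_eq_integral) auto
  also have "\<dots> = (\<integral>\<^sup>+\<omega>. (\<integral>\<^sup>+s. (\<integral>\<^sup>+t. F (\<omega>, s) * F (\<omega>, t) \<partial>lborel) \<partial>lborel) \<partial>M)"
    by (intro nn_integral_cong) (simp add: sq)
  also have "\<dots> = (\<integral>\<^sup>+s. (\<integral>\<^sup>+\<omega>. (\<integral>\<^sup>+t. F (\<omega>, s) * F (\<omega>, t) \<partial>lborel) \<partial>M) \<partial>lborel)"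
    using Fubini[of "\<lambda>p. \<integral>\<^sup>+t. F p * F (fst p, t) \<partial>lborel"] by simp
  also have "\<dots> = (\<integral>\<^sup>+s. (\<integral>\<^sup>+t. (\<integral>\<^sup>+\<omega>. F (\<omega>, s) * F (\<omega>, t) \<partial>M) \<partial>lborel) \<partial>lborel)"
    using Fubini[of "\<lambda>p. F (fst p, s) * F p" for s] by (intro nn_integral_cong) simp
  also have "\<dots> = (\<integral>\<^sup>+s. (\<integral>\<^sup>+t. indicator I s * indicator I t
      * emeasure M {\<omega>\<in>space M. X s \<omega> \<in> A \<and> X t \<omega> \<in> A} \<partial>lborel) \<partial>lborel)"
  proof (intro nn_integral_cong)
    fix s t
    have "(\<integral>\<^sup>+\<omega>. F (\<omega>, s) * F (\<omega>, t) \<partial>M)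
        = (\<integral>\<^sup>+\<omega>. indicator I s * indicator I t * indicator {\<omega>\<in>space M. X s \<omega> \<in> A \<and> X t \<omega> \<in> A} \<omega> \<partial>M)"
      by (intro nn_integral_cong) (simp add: F_def split: split_indicator)
    then show "(\<integral>\<^sup>+\<omega>. F (\<omega>, s) * F (\<omega>, t) \<partial>M)
        = indicator I s * indicator I t * emeasure M {\<omega>\<in>space M. X s \<omega> \<in> A \<and> X t \<omega> \<in> A}"
      by (simp add: nn_integral_cmult)
  qed
  finally show ?thesis .
qed

end

end

section \<open>Elementary probabilistic estimates\<close>

lemma (in prob_space) paley_zygmund_bound:
  assumes X[measurable]: "X \<in> borel_measurable M" and nonneg: "\<And>\<omega>. \<omega> \<in> space M \<Longrightarrow> 0 \<le> X \<omega>"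
    and sq: "integrable M (\<lambda>\<omega>. (X \<omega>)^2)" and \<theta>: "0 \<le> \<theta>" and T: "T > 0"
  shows "expectation X \<le> \<theta> + expectation (\<lambda>\<omega>. (X \<omega>)^2) / (4 * T) + T * prob {\<omega>\<in>space M. X \<omega> > \<theta>}"
proof -
  let ?S = "{\<omega>\<in>space M. X \<omega> > \<theta>}"
  \<comment> \<open>\<open>X \<le> X\<^sup>2 / (4 T) + T\<close> by AM-GM, used on \<open>?S\<close>; off \<open>?S\<close>, \<open>X \<le> \<theta>\<close>\<close>
  have "X \<omega> \<le> \<theta> + (X \<omega>)^2 / (4 * T) + T * indicator ?S \<omega>" if "\<omega> \<in> space M" for \<omega>
  proof -
    have "4 * T * X \<omega> \<le> (X \<omega>)^2 + 4 * T^2"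
      using sum_squares_ge_zero[of "X \<omega> - 2 * T" 0] by (simp add: power2_eq_square algebra_simps)
    then have "X \<omega> \<le> (X \<omega>)^2 / (4 * T) + T"
      using T by (simp add: field_simps power2_eq_square)
    moreover have "0 \<le> (X \<omega>)^2 / (4 * T)"
      using T by simp
    ultimately show ?thesis
      using \<theta> that by (auto split: split_indicator)
  qed
  moreover have "integrable M X"
    using square_integrable_imp_integrable[OF X] sq by simp
  ultimately have "expectation X \<le> expectation (\<lambda>\<omega>. \<theta> + (X \<omega>)^2 / (4 * T) + T * indicator ?S \<omega>)"
    using sq by (intro integral_mono Bochner_Integration.integrable_add integrable_divide
      integrable_mult_right integrable_real_indicator) (auto simp: less_top[symmetric])
  also have "\<dots> = \<theta> + expectation (\<lambda>\<omega>. (X \<omega>)^2) / (4 * T) + T * prob ?S"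
    using sq by (subst Bochner_Integration.integral_add, (auto simp: less_top[symmetric])[2])+
      (simp add: prob_space)
  finally show ?thesis .
qed

lemma (in prob_space) paley_zygmund:
  assumes X[measurable]: "X \<in> borel_measurable M" and nonneg: "\<And>\<omega>. \<omega> \<in> space M \<Longrightarrow> 0 \<le> X \<omega>"
    and sq: "integrable M (\<lambda>\<omega>. (X \<omega>)^2)" and \<theta>: "0 \<le> \<theta>" "\<theta> \<le> expectation X"
  shows "(expectation X - \<theta>)^2 \<le> expectation (\<lambda>\<omega>. (X \<omega>)^2) * prob {\<omega>\<in>space M. X \<omega> > \<theta>}"
proof (cases "expectation X = \<theta>")
  case False
  define d where "d = expectation X - \<theta>"
  define q where "q = expectation (\<lambda>\<omega>. (X \<omega>)^2)"
  define p where "p = prob {\<omega>\<in>space M. X \<omega> > \<theta>}"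
  have d: "d > 0" using False \<theta> by (simp add: d_def)
  have bound: "d \<le> q / (4 * T) + T * p" if "T > 0" for T
    using paley_zygmund_bound[OF X nonneg sq \<theta>(1) that] by (simp add: d_def q_def p_def)
  have "q > 0"
  proof (rule ccontr)
    assume "\<not> q > 0"
    moreover have "0 \<le> q"
      unfolding q_def by (intro integral_nonneg_AE) simp
    ultimately have "d \<le> d / 2 * p"
      using bound[of "d / 2"] d by simp
    also have "\<dots> \<le> d / 2"
      using d by (simp add: p_def mult_left_le)
    finally show False
      using d by simp
  qed
  then have "d \<le> d / 2 + q * p / (2 * d)"
    using bound[of "q / (2 * d)"] d by (simp add: field_simps)
  then have "d^2 \<le> q * p"
    using d by (simp add: field_simps power2_eq_square)
  then show ?thesis by (simp add: d_def q_def p_def)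
qed simp

lemma (in prob_space) tendsto_prob_0_if_AE_eventually_notin:
  assumes "\<And>n. G n \<in> events" and "AE \<omega> in M. \<forall>\<^sub>F n in sequentially. \<omega> \<notin> G n"
  shows "(\<lambda>n. prob (G n)) \<longlonglongrightarrow> 0"
proof -
  have "(\<lambda>n. \<integral>\<omega>. indicator (G n) \<omega> \<partial>M) \<longlonglongrightarrow> (\<integral>\<omega>. (0::real) \<partial>M)"
  proof (rule integral_dominated_convergence[where w="\<lambda>_. 1"])
    show "AE \<omega> in M. (\<lambda>n. indicator (G n) \<omega>) \<longlonglongrightarrow> (0::real)"
      using assms(2) by eventually_elim (rule tendsto_eventually, auto elim: eventually_mono)
  qed (use assms(1) in \<open>auto split: split_indicator\<close>)
  then show ?thesis
    using assms(1) by simp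
qed

lemma (in prob_space) exists_pos_level_prob_gt:
  fixes X :: "'a \<Rightarrow> real"
  assumes [measurable]: "X \<in> borel_measurable M" and pos: "0 < prob {\<omega>\<in>space M. X \<omega> > 0}"
  shows "\<exists>c>0. 0 < prob {\<omega>\<in>space M. X \<omega> > c}"
proof -
  define S where "S n = {\<omega>\<in>space M. X \<omega> > inverse (real (Suc n))}" for n
  have "range S \<subseteq> events"
    by (auto simp: S_def)
  moreover have "incseq S"
  proof (rule incseq_SucI, rule subsetI)
    fix n \<omega> assume "\<omega> \<in> S n"
    moreover have "inverse (real (Suc (Suc n))) \<le> inverse (real (Suc n))"
      by (rule le_imp_inverse_le) auto
    ultimately show "\<omega> \<in> S (Suc n)"
      unfolding S_def by (blast intro: le_less_trans)
  qed
  moreover have "(\<Union>n. S n) = {\<omega>\<in>space M. X \<omega> > 0}"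
  proof (intro equalityI subsetI)
    fix \<omega> assume "\<omega> \<in> {\<omega>\<in>space M. X \<omega> > 0}"
    then obtain n where "\<omega> \<in> space M" "inverse (real (Suc n)) < X \<omega>"
      using reals_Archimedean by blast
    then show "\<omega> \<in> (\<Union>n. S n)"
      by (auto simp: S_def simp del: of_nat_Suc)
  qed (auto simp: S_def intro: less_trans[rotated])
  ultimately have "(\<lambda>n. prob (S n)) \<longlonglongrightarrow> prob {\<omega>\<in>space M. X \<omega> > 0}"
    by (metis finite_Lim_measure_incseq)
  then have "\<forall>\<^sub>F n in sequentially. 0 < prob (S n)"
    using pos by (rule order_tendstoD(1))
  then obtain n where "0 < prob (S n)"
    by (auto simp: eventually_sequentially)
  then show ?thesis
    by (intro exI[of _ "inverse (real (Suc n))"]) (simp add: S_def)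
qed

section \<open>Occupation times of fractional Brownian motion near the origin\<close>

lemma nn_integral_abs_diff_powr:
  fixes H s :: real
  assumes "H < 1"
  shows "(\<integral>\<^sup>+t. indicator {-1..1} (t - s) * ennreal (\<bar>t - s\<bar> powr (-H)) \<partial>lborel) = ennreal (2 / (1 - H))"
proof -
  have "((\<lambda>r. r powr (-H)) has_integral 1 / (1 - H)) {0..1}"
    using has_integral_powr_from_0[of "-H" 1] assms by simp
  then have right: "((\<lambda>r. \<bar>r\<bar> powr (-H)) has_integral 1 / (1 - H)) {0..1}"
    by (rule has_integral_eq[rotated]) simp
  have "((\<lambda>r. \<bar>- r\<bar> powr (-H)) has_integral 1 / (1 - H)) {-1..-0}"
    using right by (subst has_integral_reflect_real)
  then have left: "((\<lambda>r. \<bar>r\<bar> powr (-H)) has_integral 1 / (1 - H)) {-1..0}"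
    by simp
  have "((\<lambda>r. \<bar>r\<bar> powr (-H)) has_integral 1 / (1 - H) + 1 / (1 - H)) {-1..1}"
    by (rule has_integral_combine[OF _ _ left right]) auto
  then have "((\<lambda>r. if r \<in> {-1..1} then \<bar>r\<bar> powr (-H) else 0) has_integral 2 / (1 - H)) UNIV"
    unfolding has_integral_restrict_UNIV by simp
  then have "((\<lambda>r. indicator {-1..1} r * \<bar>r\<bar> powr (-H)) has_integral 2 / (1 - H)) UNIV"
    by (rule has_integral_eq[rotated]) (simp add: indicator_def)
  moreover have m: "(\<lambda>r. indicator {-1..1} r * \<bar>r\<bar> powr (-H)) \<in> borel_measurable borel"
    by measurable
  ultimately have "(\<integral>\<^sup>+r. ennreal (indicator {-1..1} r * \<bar>r\<bar> powr (-H)) \<partial>lborel) = 2 / (1 - H)"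
    using nn_integral_has_integral_lborel[OF m] by simp
  also have "(\<integral>\<^sup>+r. ennreal (indicator {-1..1} r * \<bar>r\<bar> powr (-H)) \<partial>lborel)
      = (\<integral>\<^sup>+t. ennreal (indicator {-1..1} (t - s) * \<bar>t - s\<bar> powr (-H)) \<partial>lborel)"
    using nn_integral_real_affine[of "\<lambda>r. ennreal (indicator {-1..1} r * \<bar>r\<bar> powr (-H))" 1 "-s"] m
    by simp
  finally show ?thesis
    by (simp add: indicator_mult_ennreal)
qed

lemma ennreal_mult_inverse_2: "0 \<le> r \<Longrightarrow> ennreal r * inverse 2 = ennreal (r / 2)"
  by (metis divide_ennreal divide_ennreal_def ennreal_numeral zero_less_numeral)

lemma fbm_occupation_time_first_moment:
  assumes fbm: "fbm M H B" and H: "0 < H" "H < 1"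
    and paths: "\<forall>\<omega>\<in>space M. continuous_on UNIV (\<lambda>s. B s \<omega>)"
  shows "\<exists>c>0. \<forall>\<delta>. 0 < \<delta> \<and> \<delta> \<le> 1 \<longrightarrow> c * \<delta> \<le> (\<integral>\<omega>. occupation_time B {1/2<..1} {-\<delta><..<\<delta>} \<omega> \<partial>M)"
proof -
  interpret prob_space M using fbm_prob_space[OF fbm] .
  obtain c where c: "c > 0" and small_ball: "\<And>s \<delta>. 1/2 \<le> s \<Longrightarrow> s \<le> 1 \<Longrightarrow> 0 < \<delta> \<Longrightarrow> \<delta> \<le> 1 \<Longrightarrow>
      c * \<delta> \<le> prob {\<omega>\<in>space M. \<bar>B s \<omega>\<bar> < \<delta>}"
    using fbm_small_ball_ge[OF fbm H] by blast
  show ?thesis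
  proof (intro exI conjI allI impI)
    show "c / 2 > 0" using c by simp
    fix \<delta> :: real assume \<delta>: "0 < \<delta> \<and> \<delta> \<le> 1"
    have "{\<omega>\<in>space M. B s \<omega> \<in> {-\<delta><..<\<delta>}} = {\<omega>\<in>space M. \<bar>B s \<omega>\<bar> < \<delta>}" for s
      by auto
    then have "(\<integral>\<^sup>+s. ennreal (c * \<delta>) * indicator {1/2<..1::real} s \<partial>lborel)
        \<le> (\<integral>\<^sup>+s. indicator {1/2<..1} s * emeasure M {\<omega>\<in>space M. B s \<omega> \<in> {-\<delta><..<\<delta>}} \<partial>lborel)"
      using small_ball \<delta> by (intro nn_integral_mono) (auto simp: emeasure_eq_measure split: split_indicator)
    also have "\<dots> = ennreal (expectation (occupation_time B {1/2<..1} {-\<delta><..<\<delta>}))"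
      using fbm_measurable[OF fbm] paths by (intro expectation_occupation_time[symmetric]) auto
    finally have "ennreal (c / 2 * \<delta>) \<le> ennreal (expectation (occupation_time B {1/2<..1} {-\<delta><..<\<delta>}))"
      using c \<delta> by (simp add: nn_integral_cmult_indicator ennreal_mult_inverse_2)
    moreover have "0 \<le> expectation (occupation_time B {1/2<..1} {-\<delta><..<\<delta>})"
      by (intro integral_nonneg_AE AE_I2 occupation_time_nonneg)
    ultimately show "c / 2 * \<delta> \<le> expectation (occupation_time B {1/2<..1} {-\<delta><..<\<delta>})"
      by simp
  qed
qed

lemma fbm_small_ball_pair_nn_integral_le:
  assumes fbm: "fbm M H B" and H: "0 < H" "H < 1"
  shows "\<exists>C>0. \<forall>s \<delta>. 0 < \<delta> \<longrightarrow>
    (\<integral>\<^sup>+t. indicator {1/2<..1} s * indicator {1/2<..1} t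
       * emeasure M {\<omega>\<in>space M. B s \<omega> \<in> {-\<delta><..<\<delta>} \<and> B t \<omega> \<in> {-\<delta><..<\<delta>}} \<partial>lborel)
    \<le> ennreal (C * \<delta>^2) * indicator {1/2<..1::real} s"
proof -
  interpret prob_space M using fbm_prob_space[OF fbm] .
  obtain C where C: "C > 0" and small_ball: "\<And>s t \<delta>. 1/2 \<le> s \<Longrightarrow> s \<le> 1 \<Longrightarrow> 1/2 \<le> t \<Longrightarrow> t \<le> 1 \<Longrightarrow>
      s \<noteq> t \<Longrightarrow> 0 < \<delta> \<Longrightarrow> prob {\<omega>\<in>space M. \<bar>B s \<omega>\<bar> < \<delta> \<and> \<bar>B t \<omega>\<bar> < \<delta>} \<le> C * \<delta>^2 * \<bar>t - s\<bar> powr (-H)"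
    using fbm_small_ball_pair_le[OF fbm H] by blast
  let ?I = "{1/2<..1::real}"
  let ?E = "\<lambda>\<delta> s t. emeasure M {\<omega>\<in>space M. B s \<omega> \<in> {-\<delta><..<\<delta>} \<and> B t \<omega> \<in> {-\<delta><..<\<delta>}}"
  have "(\<integral>\<^sup>+t. indicator ?I s * indicator ?I t * ?E \<delta> s t \<partial>lborel)
      \<le> ennreal (C * (2 / (1 - H)) * \<delta>^2) * indicator ?I s" if \<delta>: "0 < \<delta>" for s \<delta>
  proof (cases "s \<in> ?I")
    case True
    have "(\<integral>\<^sup>+t. indicator ?I s * indicator ?I t * ?E \<delta> s t \<partial>lborel)
        \<le> (\<integral>\<^sup>+t. ennreal (C * \<delta>^2) * (indicator {-1..1} (t - s) * ennreal (\<bar>t - s\<bar> powr (-H))) \<partial>lborel)"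
      using AE_lborel_singleton[of s]
    proof (rule nn_integral_mono_AE[OF AE_mp], intro AE_I2 impI)
      fix t assume "t \<noteq> s"
      have "{\<omega>\<in>space M. B s \<omega> \<in> {-\<delta><..<\<delta>} \<and> B t \<omega> \<in> {-\<delta><..<\<delta>}}
          = {\<omega>\<in>space M. \<bar>B s \<omega>\<bar> < \<delta> \<and> \<bar>B t \<omega>\<bar> < \<delta>}"
        by auto
      then have "?E \<delta> s t = ennreal (prob {\<omega>\<in>space M. \<bar>B s \<omega>\<bar> < \<delta> \<and> \<bar>B t \<omega>\<bar> < \<delta>})"
        by (simp add: emeasure_eq_measure)
      also have "\<dots> \<le> ennreal (C * \<delta>^2 * \<bar>t - s\<bar> powr (-H))" if "t \<in> ?I"
        using small_ball[of s t \<delta>] True that \<open>t \<noteq> s\<close> \<delta> by (intro ennreal_leI) auto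
      finally show "indicator ?I s * indicator ?I t * ?E \<delta> s t
          \<le> ennreal (C * \<delta>^2) * (indicator {-1..1} (t - s) * ennreal (\<bar>t - s\<bar> powr (-H)))"
        using True C by (auto simp: ennreal_mult split: split_indicator)
    qed
    also have "\<dots> = ennreal (C * \<delta>^2) * ennreal (2 / (1 - H))"
      using H by (simp add: nn_integral_cmult nn_integral_abs_diff_powr)
    also have "\<dots> = ennreal (C * (2 / (1 - H)) * \<delta>^2)"
      using C H by (simp add: ennreal_mult[symmetric] mult_ac)
    finally show ?thesis
      using True by simp
  qed simp
  moreover have "C * (2 / (1 - H)) > 0"
    using C H by simp
  ultimately show ?thesis
    by blast
qed

lemma fbm_occupation_time_second_moment:
  assumes fbm: "fbm M H B" and H: "0 < H" "H < 1"
    and paths: "\<forall>\<omega>\<in>space M. continuous_on UNIV (\<lambda>s. B s \<omega>)"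
  shows "\<exists>K. \<forall>\<delta>>0. (\<integral>\<omega>. (occupation_time B {1/2<..1} {-\<delta><..<\<delta>} \<omega>)^2 \<partial>M) \<le> K * \<delta>^2"
proof -
  interpret prob_space M using fbm_prob_space[OF fbm] .
  obtain C where C: "C > 0" and pair: "\<And>s \<delta>. 0 < \<delta> \<Longrightarrow>
    (\<integral>\<^sup>+t. indicator {1/2<..1} s * indicator {1/2<..1} t
       * emeasure M {\<omega>\<in>space M. B s \<omega> \<in> {-\<delta><..<\<delta>} \<and> B t \<omega> \<in> {-\<delta><..<\<delta>}} \<partial>lborel)
    \<le> ennreal (C * \<delta>^2) * indicator {1/2<..1::real} s"
    using fbm_small_ball_pair_nn_integral_le[OF fbm H] by blast
  have "expectation (\<lambda>\<omega>. (occupation_time B {1/2<..1} {-\<delta><..<\<delta>} \<omega>)^2) \<le> C / 2 * \<delta>^2"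
    if \<delta>: "\<delta> > 0" for \<delta>
  proof -
    have "ennreal (expectation (\<lambda>\<omega>. (occupation_time B {1/2<..1} {-\<delta><..<\<delta>} \<omega>)^2))
        = (\<integral>\<^sup>+s. (\<integral>\<^sup>+t. indicator {1/2<..1} s * indicator {1/2<..1} t
             * emeasure M {\<omega>\<in>space M. B s \<omega> \<in> {-\<delta><..<\<delta>} \<and> B t \<omega> \<in> {-\<delta><..<\<delta>}} \<partial>lborel) \<partial>lborel)"
      using fbm_measurable[OF fbm] paths by (intro expectation_occupation_time_sq) auto
    also have "\<dots> \<le> (\<integral>\<^sup>+s. ennreal (C * \<delta>^2) * indicator {1/2<..1::real} s \<partial>lborel)"
      using pair[OF \<delta>] by (intro nn_integral_mono)
    also have "\<dots> = ennreal (C / 2 * \<delta>^2)"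
      using C by (simp add: nn_integral_cmult_indicator ennreal_mult_inverse_2)
    finally show ?thesis
      using C by simp
  qed
  then show ?thesis
    by blast
qed

lemma fbm_prob_occupation_time_gt_uniform:
  assumes fbm: "fbm M H B" and H: "0 < H" "H < 1"
    and paths: "\<forall>\<omega>\<in>space M. continuous_on UNIV (\<lambda>s. B s \<omega>)"
  shows "\<exists>c>0. \<exists>\<beta>>0. \<forall>\<delta>. 0 < \<delta> \<and> \<delta> \<le> 1 \<longrightarrow>
           \<beta> \<le> measure M {\<omega>\<in>space M. occupation_time B {1/2<..1} {-\<delta><..<\<delta>} \<omega> > c * \<delta>}"
proof -
  interpret prob_space M using fbm_prob_space[OF fbm] .
  let ?occ = "\<lambda>\<delta>. occupation_time B {1/2<..1} {-\<delta><..<\<delta>}"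
  obtain c where c: "c > 0" and first: "\<And>\<delta>. 0 < \<delta> \<Longrightarrow> \<delta> \<le> 1 \<Longrightarrow> c * \<delta> \<le> expectation (?occ \<delta>)"
    using fbm_occupation_time_first_moment[OF fbm H paths] by blast
  obtain K where second: "\<And>\<delta>. 0 < \<delta> \<Longrightarrow> expectation (\<lambda>\<omega>. (?occ \<delta> \<omega>)^2) \<le> K * \<delta>^2"
    using fbm_occupation_time_second_moment[OF fbm H paths] by blast
  have lower: "c^2 / 4 \<le> K * prob {\<omega>\<in>space M. ?occ \<delta> \<omega> > c / 2 * \<delta>}" if \<delta>: "0 < \<delta>" "\<delta> \<le> 1" for \<delta>
  proof -
    let ?p = "prob {\<omega>\<in>space M. ?occ \<delta> \<omega> > c / 2 * \<delta>}"
    have [measurable]: "?occ \<delta> \<in> borel_measurable M"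
      using fbm_measurable[OF fbm] paths by (intro occupation_time_measurable) auto
    have "(c / 2 * \<delta>)^2 \<le> (expectation (?occ \<delta>) - c / 2 * \<delta>)^2"
      using first[OF \<delta>] c \<delta> by (intro power_mono) (auto simp: mult.commute)
    also have "\<dots> \<le> expectation (\<lambda>\<omega>. (?occ \<delta> \<omega>)^2) * ?p"
      using first[OF \<delta>] mult_pos_pos[OF c \<delta>(1)] fbm_measurable[OF fbm] paths
      by (intro paley_zygmund integrable_occupation_time_sq occupation_time_nonneg) auto
    also have "\<dots> \<le> K * \<delta>^2 * ?p"
      using second[OF \<delta>(1)] by (intro mult_right_mono) auto
    finally show ?thesis
      using \<delta> by (simp add: field_simps)
  qed
  have "K > 0"
  proof (rule ccontr)
    assume "\<not> K > 0"
    then have "K * prob {\<omega>\<in>space M. ?occ 1 \<omega> > c / 2 * 1} \<le> 0"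
      by (intro mult_nonpos_nonneg) auto
    then show False
      using lower[of 1] zero_less_power[OF c, of 2] by linarith
  qed
  show ?thesis
  proof (intro exI conjI allI impI)
    show "c / 2 > 0" "c^2 / (4 * K) > 0"
      using c \<open>K > 0\<close> by simp_all
    fix \<delta> :: real assume "0 < \<delta> \<and> \<delta> \<le> 1"
    then show "c^2 / (4 * K) \<le> prob {\<omega>\<in>space M. ?occ \<delta> \<omega> > c / 2 * \<delta>}"
      using lower[of \<delta>] \<open>K > 0\<close> by (simp add: field_simps)
  qed
qed

section \<open>Local times\<close>

lemma ennreal_add_le: "0 \<le> b \<Longrightarrow> ennreal (a + b) \<le> ennreal a + ennreal b"
  by (cases "0 \<le> a") (simp_all add: ennreal_leI add_increasing)

lemma local_time_measurable:
  "jointly_continuous_local_time M B L \<Longrightarrow> L x t \<in> borel_measurable M"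
  unfolding jointly_continuous_local_time_def by simp

lemma local_time_continuous:
  assumes "jointly_continuous_local_time M B L" "\<omega> \<in> space M" "0 \<le> t"
  shows "continuous_on UNIV (\<lambda>x. L x t \<omega>)"
proof -
  have "continuous_on (UNIV \<times> {0..}) (\<lambda>(x, t). L x t \<omega>)"
    using assms(1,2) unfolding jointly_continuous_local_time_def by simp
  then have "continuous_on UNIV ((\<lambda>(x, t). L x t \<omega>) \<circ> (\<lambda>x. (x, t)))"
    using assms(3) by (intro continuous_on_compose continuous_intros) (auto elim: continuous_on_subset)
  then show ?thesis by (simp add: o_def)
qed

lemma AE_local_time_occupation_density:
  "jointly_continuous_local_time M B L \<Longrightarrow> AE \<omega> in M. \<forall>t\<ge>0. \<forall>A\<in>sets borel.
     emeasure lborel {s\<in>{0..t}. B s \<omega> \<in> A} = (\<integral>\<^sup>+x\<in>A. ennreal (L x t \<omega>) \<partial>lborel)"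
  unfolding jointly_continuous_local_time_def by simp

lemma occupation_time_le_local_time_increment:
  fixes B :: "real \<Rightarrow> 'a \<Rightarrow> real" and L :: "real \<Rightarrow> real \<Rightarrow> 'a \<Rightarrow> real"
  assumes B[measurable]: "(\<lambda>s. B s \<omega>) \<in> borel_measurable borel"
    and density: "\<forall>t\<ge>0. \<forall>A\<in>sets borel.
      emeasure lborel {s\<in>{0..t}. B s \<omega> \<in> A} = (\<integral>\<^sup>+x\<in>A. ennreal (L x t \<omega>) \<partial>lborel)"
    and t: "0 \<le> t\<^sub>1" "t\<^sub>1 \<le> t\<^sub>2"
    and L[measurable]: "(\<lambda>x. L x t\<^sub>1 \<omega>) \<in> borel_measurable borel"
    and A[measurable]: "A \<in> sets borel" and A_finite: "emeasure lborel A < \<infinity>"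
    and increment: "\<And>x. x \<in> A \<Longrightarrow> L x t\<^sub>2 \<omega> \<le> L x t\<^sub>1 \<omega> + \<eta>" and \<eta>: "0 \<le> \<eta>"
  shows "occupation_time B {t\<^sub>1<..t\<^sub>2} A \<omega> \<le> \<eta> * measure lborel A"
proof -
  let ?S = "\<lambda>J. {s\<in>J. B s \<omega> \<in> A}"
  have "?S {0..t\<^sub>2} = ?S {0..t\<^sub>1} \<union> ?S {t\<^sub>1<..t\<^sub>2}"
    using t by auto
  then have split: "emeasure lborel (?S {0..t\<^sub>2}) = emeasure lborel (?S {0..t\<^sub>1}) + emeasure lborel (?S {t\<^sub>1<..t\<^sub>2})"
    by (simp add: plus_emeasure disjoint_iff)
  have "emeasure lborel (?S {0..t\<^sub>2}) \<le> (\<integral>\<^sup>+x. (ennreal (L x t\<^sub>1 \<omega>) + ennreal \<eta>) * indicator A x \<partial>lborel)"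
    using density t increment \<eta>
    by (auto intro!: nn_integral_mono order_trans[OF ennreal_leI ennreal_add_le] split: split_indicator)
  also have "\<dots> = emeasure lborel (?S {0..t\<^sub>1}) + ennreal \<eta> * emeasure lborel A"
    using density t by (simp add: distrib_right nn_integral_add nn_integral_cmult_indicator)
  finally have "emeasure lborel (?S {0..t\<^sub>1}) + emeasure lborel (?S {t\<^sub>1<..t\<^sub>2})
      \<le> emeasure lborel (?S {0..t\<^sub>1}) + ennreal \<eta> * emeasure lborel A"
    unfolding split .
  moreover have "emeasure lborel (?S {0..t\<^sub>1}) \<le> emeasure lborel {0..t\<^sub>1}"
    by (rule emeasure_mono) auto
  then have "emeasure lborel (?S {0..t\<^sub>1}) \<le> ennreal t\<^sub>1"
    using t by simp
  then have "emeasure lborel (?S {0..t\<^sub>1}) < \<infinity>"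
    by (rule le_less_trans) simp
  ultimately have "emeasure lborel (?S {t\<^sub>1<..t\<^sub>2}) \<le> ennreal (\<eta> * measure lborel A)"
    using A_finite \<eta> by (simp add: ennreal_add_left_cancel_le emeasure_eq_ennreal_measure ennreal_mult)
  then show ?thesis
    using \<eta> unfolding occupation_time_def by (simp add: measure_def enn2real_leI)
qed

lemma occupation_time_le_if_local_time_increment_nonpos:
  assumes L: "jointly_continuous_local_time M B L" and \<omega>: "\<omega> \<in> space M"
    and path: "continuous_on UNIV (\<lambda>s. B s \<omega>)"
    and density: "\<forall>t\<ge>0. \<forall>A\<in>sets borel.
      emeasure lborel {s\<in>{0..t}. B s \<omega> \<in> A} = (\<integral>\<^sup>+x\<in>A. ennreal (L x t \<omega>) \<partial>lborel)"
    and nonpos: "L 0 1 \<omega> - L 0 (1/2) \<omega> \<le> 0" and \<eta>: "\<eta> > 0"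
  shows "\<exists>d>0. \<forall>\<delta>. 0 < \<delta> \<and> \<delta> \<le> d \<longrightarrow> occupation_time B {1/2<..1} {-\<delta><..<\<delta>} \<omega> \<le> 2 * \<eta> * \<delta>"
proof -
  have "continuous_on UNIV (\<lambda>x. L x 1 \<omega> - L x (1/2) \<omega>)"
    using local_time_continuous[OF L \<omega>] by (intro continuous_on_diff) auto
  then obtain d where d: "d > 0"
    and near: "\<And>x. dist x 0 < d \<Longrightarrow> dist (L x 1 \<omega> - L x (1/2) \<omega>) (L 0 1 \<omega> - L 0 (1/2) \<omega>) < \<eta>"
    using \<eta> unfolding continuous_on_iff by (metis UNIV_I)
  have "occupation_time B {1/2<..1} {-\<delta><..<\<delta>} \<omega> \<le> 2 * \<eta> * \<delta>" if \<delta>: "0 < \<delta>" "\<delta> \<le> d" for \<delta>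
  proof -
    have "occupation_time B {1/2<..1} {-\<delta><..<\<delta>} \<omega> \<le> \<eta> * measure lborel {-\<delta><..<\<delta>}"
    proof (rule occupation_time_le_local_time_increment[where B=B and L=L and \<omega>=\<omega>, OF _ density])
      show "(\<lambda>s. B s \<omega>) \<in> borel_measurable borel"
        using path by (rule borel_measurable_continuous_onI)
      show "(\<lambda>x. L x (1/2) \<omega>) \<in> borel_measurable borel"
        using local_time_continuous[OF L \<omega>] by (intro borel_measurable_continuous_onI) simp
      show "L x 1 \<omega> \<le> L x (1/2) \<omega> + \<eta>" if "x \<in> {-\<delta><..<\<delta>}" for x
        using near[of x] nonpos that \<delta> by (auto simp: dist_real_def abs_less_iff)
    qed (use \<eta> \<delta> in auto)
    then show ?thesis
      using \<delta> by simp
  qed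
  then show ?thesis
    using d by blast
qed

lemma fbm_prob_local_time_increment_pos:
  assumes H: "0 < H" "H < 1" and fbm: "fbm M H B"
    and paths: "\<forall>\<omega>\<in>space M. continuous_on UNIV (\<lambda>s. B s \<omega>)"
    and L: "jointly_continuous_local_time M B L"
  shows "0 < measure M {\<omega>\<in>space M. L 0 1 \<omega> - L 0 (1/2) \<omega> > 0}"
proof (rule ccontr)
  interpret prob_space M using fbm_prob_space[OF fbm] .
  note [measurable] = local_time_measurable[OF L]
  let ?occ = "\<lambda>\<delta>. occupation_time B {1/2<..1} {-\<delta><..<\<delta>}"
  obtain c \<beta> where c: "c > 0" and \<beta>: "\<beta> > 0"
    and ge: "\<And>\<delta>. 0 < \<delta> \<Longrightarrow> \<delta> \<le> 1 \<Longrightarrow> \<beta> \<le> prob {\<omega>\<in>space M. ?occ \<delta> \<omega> > c * \<delta>}"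
    using fbm_prob_occupation_time_gt_uniform[OF fbm H paths] by blast
  define \<delta> where "\<delta> n = inverse (real (Suc n))" for n
  have \<delta>: "0 < \<delta> n" "\<delta> n \<le> 1" for n
    by (simp_all add: \<delta>_def inverse_le_1_iff)
  define G where "G n = {\<omega>\<in>space M. ?occ (\<delta> n) \<omega> > c * \<delta> n}" for n
  have G: "G n \<in> events" for n
  proof -
    have [measurable]: "?occ (\<delta> n) \<in> borel_measurable M"
      using fbm_measurable[OF fbm] paths by (intro occupation_time_measurable) auto
    show ?thesis unfolding G_def by measurable
  qed
  assume "\<not> 0 < prob {\<omega>\<in>space M. L 0 1 \<omega> - L 0 (1/2) \<omega> > 0}"
  then have "AE \<omega> in M. L 0 1 \<omega> - L 0 (1/2) \<omega> \<le> 0"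
    by (subst AE_iff_measurable[OF _ refl]) (auto simp: not_le emeasure_eq_measure intro!: antisym)
  \<comment> \<open>then, pathwise, the occupation time of \<open>(-\<delta>, \<delta>)\<close> is \<open>o(\<delta>)\<close>\<close>
  then have "AE \<omega> in M. \<forall>\<^sub>F n in sequentially. \<omega> \<notin> G n"
    using AE_space AE_local_time_occupation_density[OF L]
  proof eventually_elim
    case (elim \<omega>)
    obtain d where d: "d > 0" and small: "\<And>\<delta>'. 0 < \<delta>' \<Longrightarrow> \<delta>' \<le> d \<Longrightarrow> ?occ \<delta>' \<omega> \<le> 2 * (c / 4) * \<delta>'"
      using occupation_time_le_if_local_time_increment_nonpos[OF L, of \<omega> "c / 4"] elim paths c by auto
    have "\<forall>\<^sub>F n in sequentially. \<delta> n < d"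
      using order_tendstoD(2)[OF LIMSEQ_inverse_real_of_nat d] by (simp add: \<delta>_def)
    then show ?case
    proof eventually_elim
      case (elim n)
      then show ?case
        using small[of "\<delta> n"] \<delta>[of n] mult_pos_pos[OF c \<delta>(1)[of n]] by (auto simp: G_def)
    qed
  qed
  then have "(\<lambda>n. prob (G n)) \<longlonglongrightarrow> 0"
    by (rule tendsto_prob_0_if_AE_eventually_notin[OF G])
  then have "\<forall>\<^sub>F n in sequentially. prob (G n) < \<beta>"
    using \<beta> by (rule order_tendstoD(2))
  then obtain n where "prob (G n) < \<beta>"
    by (auto simp: eventually_sequentially)
  then show False
    using ge[OF \<delta>(1)[of n] \<delta>(2)[of n]] unfolding G_def by simp
qed

section \<open>Infima of continuous random fields\<close>

lemma cINF_closure_eq: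
  fixes g :: "'b::topological_space \<Rightarrow> real"
  assumes g: "continuous_on (closure D) g" and "D \<noteq> {}" and bdd: "bdd_below (g ` closure D)"
  shows "(INF x\<in>closure D. g x) = (INF x\<in>D. g x)"
proof (rule antisym)
  show "(INF x\<in>closure D. g x) \<le> (INF x\<in>D. g x)"
    using assms(2) bdd closure_subset by (rule cINF_superset_mono) simp
  have "bdd_below (g ` D)"
    using bdd closure_subset by (meson bdd_below_mono image_mono)
  then have "g ` D \<subseteq> {(INF x\<in>D. g x)..}"
    by (auto intro: cINF_lower)
  then have "g ` closure D \<subseteq> {(INF x\<in>D. g x)..}"
    by (rule image_closure_subset[OF g closed_atLeast])
  then show "(INF x\<in>D. g x) \<le> (INF x\<in>closure D. g x)"
    using assms(2) by (intro cINF_greatest) auto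
qed

lemma borel_measurable_INF_Icc:
  fixes f :: "real \<Rightarrow> 'a \<Rightarrow> real"
  assumes f[measurable]: "\<And>x. f x \<in> borel_measurable M"
    and cont: "\<And>\<omega>. \<omega> \<in> space M \<Longrightarrow> continuous_on {a..b} (\<lambda>x. f x \<omega>)" and "a < b"
  shows "(\<lambda>\<omega>. INF x\<in>{a..b}. f x \<omega>) \<in> borel_measurable M"
proof -
  let ?D = "{a..b} \<inter> \<rat>"
  have closure: "closure ?D = {a..b}"
    using closure_convex_Int_superset[of "{a..b}" \<rat>] \<open>a < b\<close> by (simp add: Rats_closure_real)
  obtain r where "r \<in> \<rat>" "a < r" "r < b"
    using Rats_dense_in_real[OF \<open>a < b\<close>] by blast
  then have "r \<in> ?D"
    by simp
  then have "?D \<noteq> {}"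
    by blast
  have "(INF x\<in>{a..b}. f x \<omega>) = (INF x\<in>?D. f x \<omega>)" if "\<omega> \<in> space M" for \<omega>
    using cINF_closure_eq[of ?D "\<lambda>x. f x \<omega>"] cont[OF that] \<open>?D \<noteq> {}\<close> compact_continuous_image[OF cont[OF that]]
    unfolding closure by (simp add: bounded_imp_bdd_below compact_imp_bounded)
  moreover have "(\<lambda>\<omega>. INF x\<in>?D. f x \<omega>) \<in> borel_measurable M"
    by (intro borel_measurable_cINF_real countable_Int2 countable_rat f)
  ultimately show ?thesis
    by (subst measurable_cong) auto
qed

lemma INF_Icc_antimono:
  fixes g :: "real \<Rightarrow> real"
  assumes "continuous_on UNIV g" "0 \<le> r" "r \<le> s"
  shows "(INF x\<in>{-s..s}. g x) \<le> (INF x\<in>{-r..r}. g x)"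
proof (rule cINF_superset_mono)
  show "bdd_below (g ` {-s..s})"
    using compact_continuous_image[OF continuous_on_subset[OF assms(1)]]
    by (simp add: bounded_imp_bdd_below compact_imp_bounded)
qed (use assms in auto)

lemma ex_INF_Icc_pos_iff:
  fixes g :: "real \<Rightarrow> real"
  assumes g: "continuous_on UNIV g"
  shows "(\<exists>m. 0 < (INF x\<in>{-inverse (real (Suc m))..inverse (real (Suc m))}. g x)) \<longleftrightarrow> 0 < g 0"
proof
  assume "\<exists>m. 0 < (INF x\<in>{-inverse (real (Suc m))..inverse (real (Suc m))}. g x)"
  then obtain m where "0 < (INF x\<in>{-inverse (real (Suc m))..inverse (real (Suc m))}. g x)"
    by blast
  moreover have "(INF x\<in>{-inverse (real (Suc m))..inverse (real (Suc m))}. g x) \<le> g 0"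
    using INF_Icc_antimono[OF g, of 0 "inverse (real (Suc m))"] by simp
  ultimately show "0 < g 0"
    by simp
next
  assume pos: "0 < g 0"
  then obtain d where d: "d > 0" and near: "\<And>x. dist x 0 < d \<Longrightarrow> dist (g x) (g 0) < g 0 / 2"
    using g unfolding continuous_on_iff by (metis UNIV_I half_gt_zero)
  obtain m where m: "inverse (real (Suc m)) < d"
    using reals_Archimedean[OF d] by blast
  have "g 0 / 2 \<le> g x" if "x \<in> {-inverse (real (Suc m))..inverse (real (Suc m))}" for x
  proof -
    have "\<bar>x\<bar> < d"
      using that m by auto
    then show ?thesis
      using near[of x] by (auto simp: dist_real_def abs_if split: if_splits)
  qed
  then have "g 0 / 2 \<le> (INF x\<in>{-inverse (real (Suc m))..inverse (real (Suc m))}. g x)"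
    by (intro cINF_greatest) auto
  then show "\<exists>m. 0 < (INF x\<in>{-inverse (real (Suc m))..inverse (real (Suc m))}. g x)"
    using pos by (intro exI[of _ m]) simp
qed

lemma (in prob_space) tendsto_prob_INF_pos:
  fixes Z :: "real \<Rightarrow> 'a \<Rightarrow> real"
  assumes Z[measurable]: "\<And>x. Z x \<in> borel_measurable M"
    and cont: "\<And>\<omega>. \<omega> \<in> space M \<Longrightarrow> continuous_on UNIV (\<lambda>x. Z x \<omega>)"
  defines "a m \<equiv> inverse (real (Suc m))"
  shows "(\<lambda>m. prob {\<omega>\<in>space M. (INF x\<in>{-a m..a m}. Z x \<omega>) > 0}) \<longlonglongrightarrow> prob {\<omega>\<in>space M. Z 0 \<omega> > 0}"
proof -
  define S where "S m = {\<omega>\<in>space M. (INF x\<in>{-a m..a m}. Z x \<omega>) > 0}" for m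
  have "S m \<in> events" for m
  proof -
    have [measurable]: "(\<lambda>\<omega>. INF x\<in>{-a m..a m}. Z x \<omega>) \<in> borel_measurable M"
      by (intro borel_measurable_INF_Icc continuous_on_subset[OF cont]) (auto simp: a_def)
    show ?thesis unfolding S_def by measurable
  qed
  moreover have "incseq S"
  proof (rule incseq_SucI, rule subsetI)
    fix m \<omega> assume "\<omega> \<in> S m"
    moreover have "a (Suc m) \<le> a m"
      unfolding a_def by (rule le_imp_inverse_le) auto
    ultimately show "\<omega> \<in> S (Suc m)"
      using INF_Icc_antimono[OF cont, of \<omega> "a (Suc m)" "a m"] by (auto simp: S_def a_def)
  qed
  ultimately have "(\<lambda>m. prob (S m)) \<longlonglongrightarrow> prob (\<Union>m. S m)"
    by (intro finite_Lim_measure_incseq) auto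
  moreover have "(\<Union>m. S m) = {\<omega>\<in>space M. Z 0 \<omega> > 0}"
    using ex_INF_Icc_pos_iff[OF cont] by (auto simp: S_def a_def)
  ultimately show ?thesis
    by (simp add: S_def)
qed

lemma (in prob_space) exists_prob_INF_pos_ge_half:
  fixes Z :: "real \<Rightarrow> 'a \<Rightarrow> real"
  assumes Z: "\<And>x. Z x \<in> borel_measurable M"
    and cont: "\<And>\<omega>. \<omega> \<in> space M \<Longrightarrow> continuous_on UNIV (\<lambda>x. Z x \<omega>)"
    and pos: "0 < prob {\<omega>\<in>space M. Z 0 \<omega> > 0}"
  shows "\<exists>a>0. prob {\<omega>\<in>space M. Z 0 \<omega> > 0} \<le> 2 * prob {\<omega>\<in>space M. (INF x\<in>{-a..a}. Z x \<omega>) > 0}"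
proof -
  obtain m where "prob {\<omega>\<in>space M. Z 0 \<omega> > 0} / 2
      < prob {\<omega>\<in>space M. (INF x\<in>{-inverse (real (Suc m))..inverse (real (Suc m))}. Z x \<omega>) > 0}"
    using order_tendstoD(1)[OF tendsto_prob_INF_pos[OF Z cont], of "prob {\<omega>\<in>space M. Z 0 \<omega> > 0} / 2"] pos
    by (auto simp: eventually_sequentially)
  then show ?thesis
    by (intro exI[of _ "inverse (real (Suc m))"]) auto
qed

theorem lemma8:
  fixes M :: "'a measure" and H :: real
    and B :: "real \<Rightarrow> 'a \<Rightarrow> real" and L :: "real \<Rightarrow> real \<Rightarrow> 'a \<Rightarrow> real"
  assumes "0 < H" "H < 1"
    and "fbm M H B"
    and "\<forall>\<omega>\<in>space M. continuous_on UNIV (\<lambda>s. B s \<omega>)"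
    and "jointly_continuous_local_time M B L"
  shows "\<exists>\<epsilon>0>0. \<forall>\<epsilon>. 0 < \<epsilon> \<and> \<epsilon> < \<epsilon>0 \<longrightarrow> (\<exists>a>0.
           0 < measure M {\<omega>\<in>space M. L 0 1 \<omega> - L 0 (1/2) \<omega> > 4 * \<epsilon>} \<and>
           measure M {\<omega>\<in>space M. L 0 1 \<omega> - L 0 (1/2) \<omega> > 4 * \<epsilon>}
             \<le> 2 * measure M {\<omega>\<in>space M.
                      (INF x\<in>{-a..a}. L x 1 \<omega> - L x (1/2) \<omega>) > 0})"
proof -
  interpret prob_space M using fbm_prob_space[OF assms(3)] .
  note [measurable] = local_time_measurable[OF assms(5)]
  define Z where "Z x \<omega> = L x 1 \<omega> - L x (1/2) \<omega>" for x \<omega>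
  have Z[measurable]: "Z x \<in> borel_measurable M" for x
    unfolding Z_def by measurable
  have Z_cont: "continuous_on UNIV (\<lambda>x. Z x \<omega>)" if "\<omega> \<in> space M" for \<omega>
    unfolding Z_def using local_time_continuous[OF assms(5) that] by (intro continuous_on_diff) auto
  have pos: "0 < prob {\<omega>\<in>space M. Z 0 \<omega> > 0}"
    using fbm_prob_local_time_increment_pos[OF assms] by (simp add: Z_def)
  obtain c where c: "c > 0" "0 < prob {\<omega>\<in>space M. Z 0 \<omega> > c}"
    using exists_pos_level_prob_gt[OF Z pos] by blast
  obtain a where a: "a > 0"
    and half: "prob {\<omega>\<in>space M. Z 0 \<omega> > 0} \<le> 2 * prob {\<omega>\<in>space M. (INF x\<in>{-a..a}. Z x \<omega>) > 0}"
    using exists_prob_INF_pos_ge_half[OF Z Z_cont pos] by blast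
  show ?thesis
  proof (rule exI[of _ "c / 4"], intro conjI allI impI)
    fix \<epsilon> :: real assume "0 < \<epsilon> \<and> \<epsilon> < c / 4"
    then have "prob {\<omega>\<in>space M. Z 0 \<omega> > c} \<le> prob {\<omega>\<in>space M. Z 0 \<omega> > 4 * \<epsilon>}"
      and "prob {\<omega>\<in>space M. Z 0 \<omega> > 4 * \<epsilon>} \<le> prob {\<omega>\<in>space M. Z 0 \<omega> > 0}"
      by (auto intro!: finite_measure_mono)
    then show "\<exists>a>0. 0 < prob {\<omega>\<in>space M. L 0 1 \<omega> - L 0 (1/2) \<omega> > 4 * \<epsilon>} \<and>
        prob {\<omega>\<in>space M. L 0 1 \<omega> - L 0 (1/2) \<omega> > 4 * \<epsilon>}
          \<le> 2 * prob {\<omega>\<in>space M. (INF x\<in>{-a..a}. L x 1 \<omega> - L x (1/2) \<omega>) > 0}"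
      using c a half unfolding Z_def by (intro exI[of _ a]) auto
  qed (use c in simp)
qed

end
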